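(* Let $F$ be a Gårding–Dirichlet polynomial of degree $M$ on $\mathrm{Sym}^2(\mathbb{R}^n)$ with $I$-eigenvalues $\lambda^F(A)=(\lambda^F_1(A),\dots,\lambda^F_M(A))$, defined by $F(tI+A)=F(I)\prod_{j=1}^M(t+\lambda^F_j(A))$. Let $p$ be a universal G-D polynomial of degree $N$ in $M$ variables, with $e$-eigenvalues $\Lambda_1(\lambda),\dots,\Lambda_N(\lambda)$ defined by $p(te+\lambda)=p(e)\prod_{j=1}^N(t+\Lambda_j(\lambda))$, and Gårding cone $\Gamma_p$. Define $P_F(A)=p(\lambda^F(A))$ for $A\in\mathrm{Sym}^2(\mathbb{R}^n)$. Then $P_F$ is a Gårding–Dirichlet polynomial of degree $N$ on $\mathrm{Sym}^2(\mathbb{R}^n)$ whose $I$-eigenvalues are $\lambda^{P_F}_j(A)=\Lambda_j(\lambda^F(A))$, $j=1,\dots,N$, and whose Gårding cone is $\Gamma_{P_F}=(\lambda^F)^{-1}(\Gamma_p)$. Moreover, if $F$ is real invariant, so is $P_F$.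
   Context: $\mathrm{Sym}^2(\mathbb{R}^n)$ is the space of real symmetric $n\times n$ matrices. A Gårding–Dirichlet (G-D) polynomial of degree $N$ on $\mathrm{Sym}^2(\mathbb{R}^n)$ is a real homogeneous polynomial $F$ of degree $N$ with $F(I)>0$ such that for every $A$ the polynomial $t\mapsto F(tI+A)$ has only real roots, and whose Gårding cone $\Gamma$ — the connected component of $\{A: F(A)\ne 0\}$ containing $I$ — contains all positive definite matrices. Real invariant means $F(gAg^t)=F(A)$ for all $g\in O(n)$. A universal G-D polynomial in $M$ variables is a symmetric homogeneous real polynomial $p$ on $\mathbb{R}^M$ with $p(e)>0$ ($e=(1,\dots,1)$), all coefficients $\ge0$, $\partial p/\partial\lambda_j(e)=k>0$ independent of $j$, which is Gårding hyperbolic with respect to $e$ ($t\mapsto p(te+\lambda)$ has only real roots for all $\lambda$); its Gårding cone $\Gamma_p$ is the connected component of $\{p\neq0\}$ containing $e$. *)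

theory Defs
  imports "HOL-Analysis.Analysis" "HOL-Library.Poly_Mapping" "HOL-Computational_Algebra.Polynomial"
begin

text \<open>Multivariate real polynomials in explicit coefficient form: a finitely supported
  map from monomials (finitely supported exponent vectors) to real coefficients.\<close>

definition mpoly_eval :: "(('v \<Rightarrow>\<^sub>0 nat) \<Rightarrow>\<^sub>0 real) \<Rightarrow> ('v \<Rightarrow> real) \<Rightarrow> real" where
  "mpoly_eval c x = (\<Sum>m\<in>Poly_Mapping.keys c. Poly_Mapping.lookup c m * (\<Prod>v\<in>Poly_Mapping.keys m. x v ^ Poly_Mapping.lookup m v))"

definition homog_mpoly :: "nat \<Rightarrow> (('v \<Rightarrow>\<^sub>0 nat) \<Rightarrow>\<^sub>0 real) \<Rightarrow> bool" where
  "homog_mpoly N c \<longleftrightarrow> (\<forall>m\<in>Poly_Mapping.keys c. (\<Sum>v\<in>Poly_Mapping.keys m. Poly_Mapping.lookup m v) = N)"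

definition sym_mat :: "real^'n^'n \<Rightarrow> bool" where
  "sym_mat A \<longleftrightarrow> transpose A = A"

definition homog_poly_on_Sym :: "nat \<Rightarrow> (real^'n^'n \<Rightarrow> real) \<Rightarrow> bool" where
  "homog_poly_on_Sym N F \<longleftrightarrow>
     (\<exists>c. homog_mpoly N c \<and> (\<forall>A. sym_mat A \<longrightarrow> F A = mpoly_eval c (\<lambda>(i,j). A$i$j)))"

definition only_real_roots :: "real poly \<Rightarrow> bool" where
  "only_real_roots q \<longleftrightarrow> (\<forall>z. poly (map_poly complex_of_real q) z = 0 \<longrightarrow> z \<in> \<real>)"

definition pos_def :: "real^'n^'n \<Rightarrow> bool" where
  "pos_def A \<longleftrightarrow> sym_mat A \<and> (\<forall>x. x \<noteq> 0 \<longrightarrow> 0 < x \<bullet> (A *v x))"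

definition garding_cone :: "(real^'n^'n \<Rightarrow> real) \<Rightarrow> (real^'n^'n) set" where
  "garding_cone F = connected_component_set {A. sym_mat A \<and> F A \<noteq> 0} (mat 1)"

definition GD_poly :: "nat \<Rightarrow> (real^'n^'n \<Rightarrow> real) \<Rightarrow> bool" where
  "GD_poly N F \<longleftrightarrow>
     homog_poly_on_Sym N F \<and> F (mat 1) > 0 \<and>
     (\<forall>A q. sym_mat A \<and> (\<forall>t. poly q t = F (t *\<^sub>R mat 1 + A)) \<longrightarrow> only_real_roots q) \<and>
     (\<forall>A. pos_def A \<longrightarrow> A \<in> garding_cone F)"

definition real_invariant :: "(real^'n^'n \<Rightarrow> real) \<Rightarrow> bool" where
  "real_invariant F \<longleftrightarrow>
     (\<forall>g A. orthogonal_matrix g \<and> sym_mat A \<longrightarrow> F (g ** A ** transpose g) = F A)"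

text \<open>Universal G-D polynomial of degree N in the variables indexed by 'm (M = CARD('m)),
  with e = vec 1.\<close>
definition universal_GD :: "nat \<Rightarrow> (real^'m \<Rightarrow> real) \<Rightarrow> bool" where
  "universal_GD N p \<longleftrightarrow>
     (\<exists>c. homog_mpoly N c \<and> (\<forall>m. Poly_Mapping.lookup c m \<ge> 0) \<and> (\<forall>x. p x = mpoly_eval c (\<lambda>i. x $ i))) \<and>
     (\<forall>\<sigma> x. \<sigma> permutes (UNIV :: 'm set) \<longrightarrow> p (\<chi> i. x $ \<sigma> i) = p x) \<and>
     p (vec 1) > 0 \<and>
     (\<exists>k>0. \<forall>j. ((\<lambda>t. p (vec 1 + t *\<^sub>R axis j 1)) has_real_derivative k) (at 0)) \<and>
     (\<forall>x q. (\<forall>t. poly q t = p (t *\<^sub>R vec 1 + x)) \<longrightarrow> only_real_roots q)"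

definition garding_cone_vec :: "(real^'m \<Rightarrow> real) \<Rightarrow> (real^'m) set" where
  "garding_cone_vec p = connected_component_set {x. p x \<noteq> 0} (vec 1)"

end

theory Submission
  imports Defs
begin

text \<open>
  Since \<open>p\<close> is symmetric, \<open>P\<^sub>F(A) = p(\<lambda>\<^sup>F(A))\<close> is a polynomial in the elementary symmetric
  functions of \<open>\<lambda>\<^sup>F(A)\<close> (fundamental theorem on symmetric polynomials, proved below for
  polynomial functions), and these are, up to the factor \<open>F(I)\<close>, the coefficients of
  \<open>t \<mapsto> F(tI + A)\<close>, hence polynomials in the entries of \<open>A\<close>. Moreover \<open>p(x)\<close> only depends on
  \<open>\<Prod>\<^sub>j (t + x\<^sub>j)\<close>, so the identities \<open>\<lambda>\<^sup>F(tI + A) \<sim> te + \<lambda>\<^sup>F(A)\<close> and \<open>\<lambda>\<^sup>F(sA) \<sim> s\<lambda>\<^sup>F(A)\<close>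
  (equality of these products) turn the definition of \<open>\<Lambda>\<close> into
  \<open>P\<^sub>F(tI + A) = P\<^sub>F(I) \<Prod>\<^sub>j (t + \<Lambda>\<^sub>j(\<lambda>\<^sup>F(A)))\<close> and make \<open>P\<^sub>F\<close> homogeneous; real-rootedness follows.

  For a continuous homogeneous \<open>f\<close> that is hyperbolic in direction \<open>e\<close>, the component of
  \<open>{f \<noteq> 0}\<close> containing \<open>e\<close> is the set where all \<open>e\<close>-eigenvalues are positive: this set is
  starlike with respect to \<open>e\<close> and relatively clopen in \<open>{f \<noteq> 0}\<close>. Applied to \<open>F\<close>, \<open>p\<close> and \<open>P\<^sub>F\<close> it
  identifies the three Garding cones, and positive definite matrices lie in the cone of \<open>P\<^sub>F\<close>
  because \<open>p > 0\<close> on the positive orthant (its coefficients are non-negative). Real invariance is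
  inherited since conjugation by an orthogonal matrix commutes with \<open>A \<mapsto> tI + A\<close>.
\<close>

section \<open>Polynomial functions\<close>

definition monomial_eval :: "('v \<Rightarrow>\<^sub>0 nat) \<Rightarrow> ('v \<Rightarrow> real) \<Rightarrow> real" where
  "monomial_eval m x = (\<Prod>v\<in>Poly_Mapping.keys m. x v ^ Poly_Mapping.lookup m v)"

definition monomial_degree :: "('v \<Rightarrow>\<^sub>0 nat) \<Rightarrow> nat" where
  "monomial_degree m = (\<Sum>v\<in>Poly_Mapping.keys m. Poly_Mapping.lookup m v)"

lemma mpoly_eval_eq_sum_monomial_eval:
  "mpoly_eval c x = (\<Sum>m\<in>Poly_Mapping.keys c. Poly_Mapping.lookup c m * monomial_eval m x)"
  by (simp add: mpoly_eval_def monomial_eval_def)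

lemma monomial_eval_superset:
  "finite S \<Longrightarrow> Poly_Mapping.keys m \<subseteq> S \<Longrightarrow>
    monomial_eval m x = (\<Prod>v\<in>S. x v ^ Poly_Mapping.lookup m v)"
  unfolding monomial_eval_def by (rule prod.mono_neutral_left) (auto simp: in_keys_iff)

lemma mpoly_eval_superset:
  "finite S \<Longrightarrow> Poly_Mapping.keys c \<subseteq> S \<Longrightarrow>
    mpoly_eval c x = (\<Sum>m\<in>S. Poly_Mapping.lookup c m * monomial_eval m x)"
  unfolding mpoly_eval_eq_sum_monomial_eval by (rule sum.mono_neutral_left) (auto simp: in_keys_iff)

lemma mpoly_eval_add: "mpoly_eval (a + b) x = mpoly_eval a x + mpoly_eval b x"
proof -
  let ?S = "Poly_Mapping.keys a \<union> Poly_Mapping.keys b"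
  have "mpoly_eval (a + b) x = (\<Sum>m\<in>?S. Poly_Mapping.lookup (a + b) m * monomial_eval m x)"
    by (rule mpoly_eval_superset[OF _ keys_add]) simp
  also have "\<dots> = (\<Sum>m\<in>?S. Poly_Mapping.lookup a m * monomial_eval m x)
                 + (\<Sum>m\<in>?S. Poly_Mapping.lookup b m * monomial_eval m x)"
    by (simp add: lookup_add distrib_right sum.distrib)
  also have "\<dots> = mpoly_eval a x + mpoly_eval b x"
    by (simp add: mpoly_eval_superset[of ?S])
  finally show ?thesis .
qed

lemma mpoly_eval_0 [simp]: "mpoly_eval 0 x = 0"
  by (simp add: mpoly_eval_def)

lemma mpoly_eval_sum: "mpoly_eval (\<Sum>i\<in>I. c i) x = (\<Sum>i\<in>I. mpoly_eval (c i) x)"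
  by (induction I rule: infinite_finite_induct) (auto simp: mpoly_eval_add)

lemma mpoly_eval_single: "mpoly_eval (Poly_Mapping.single m a) x = a * monomial_eval m x"
  by (subst mpoly_eval_superset[of "{m}"]) (auto simp: lookup_single)

lemma monomial_eval_add: "monomial_eval (m1 + m2) x = monomial_eval m1 x * monomial_eval m2 x"
proof -
  let ?S = "Poly_Mapping.keys m1 \<union> Poly_Mapping.keys m2"
  have "monomial_eval (m1 + m2) x = (\<Prod>v\<in>?S. x v ^ Poly_Mapping.lookup (m1 + m2) v)"
    by (rule monomial_eval_superset[OF _ keys_add]) simp
  also have "\<dots> = (\<Prod>v\<in>?S. x v ^ Poly_Mapping.lookup m1 v) * (\<Prod>v\<in>?S. x v ^ Poly_Mapping.lookup m2 v)"
    by (simp add: lookup_add power_add prod.distrib)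
  also have "\<dots> = monomial_eval m1 x * monomial_eval m2 x"
    by (simp add: monomial_eval_superset[of ?S])
  finally show ?thesis .
qed

lemma monomial_eval_0 [simp]: "monomial_eval 0 x = 1"
  by (simp add: monomial_eval_def)

lemma monomial_eval_single: "monomial_eval (Poly_Mapping.single v k) x = x v ^ k"
  by (subst monomial_eval_superset[of "{v}"]) (auto simp: lookup_single)

lemma monomial_eval_scale:
  "monomial_eval m (\<lambda>v. s * x v) = s ^ monomial_degree m * monomial_eval m x"
  by (simp add: monomial_eval_def monomial_degree_def power_mult_distrib prod.distrib power_sum)

lemma mpoly_eval_homogeneous:
  "homog_mpoly N c \<Longrightarrow> mpoly_eval c (\<lambda>v. s * x v) = s ^ N * mpoly_eval c x"
  by (simp add: homog_mpoly_def monomial_degree_def mpoly_eval_eq_sum_monomial_eval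
      monomial_eval_scale sum_distrib_left mult_ac)

lemma continuous_on_mpoly_eval:
  "(\<And>v. continuous_on S (\<lambda>x. g x v)) \<Longrightarrow> continuous_on S (\<lambda>x. mpoly_eval c (g x))"
  unfolding mpoly_eval_def by (intro continuous_intros) auto

lemma mpoly_eval_pos:
  assumes "\<forall>m. Poly_Mapping.lookup c m \<ge> 0" and "c \<noteq> 0" and "\<forall>v. x v > 0"
  shows "mpoly_eval c x > 0"
  unfolding mpoly_eval_def
proof (rule sum_pos)
  show "Poly_Mapping.keys c \<noteq> {}"
    using \<open>c \<noteq> 0\<close> by simp
  fix m assume "m \<in> Poly_Mapping.keys c"
  then have "Poly_Mapping.lookup c m > 0"
    using assms(1) by (metis in_keys_iff order_le_neq_trans)
  moreover have "(\<Prod>v\<in>Poly_Mapping.keys m. x v ^ Poly_Mapping.lookup m v) > 0"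
    using assms(3) by (intro prod_pos) auto
  ultimately show "Poly_Mapping.lookup c m * (\<Prod>v\<in>Poly_Mapping.keys m. x v ^ Poly_Mapping.lookup m v) > 0"
    by simp
qed simp

inductive poly_fun :: "(('v \<Rightarrow> real) \<Rightarrow> real) \<Rightarrow> bool" where
  poly_fun_const: "poly_fun (\<lambda>x. c)"
| poly_fun_var: "poly_fun (\<lambda>x. x v)"
| poly_fun_add: "poly_fun f \<Longrightarrow> poly_fun g \<Longrightarrow> poly_fun (\<lambda>x. f x + g x)"
| poly_fun_mult: "poly_fun f \<Longrightarrow> poly_fun g \<Longrightarrow> poly_fun (\<lambda>x. f x * g x)"

lemma poly_fun_sum: "(\<And>i. i \<in> I \<Longrightarrow> poly_fun (f i)) \<Longrightarrow> poly_fun (\<lambda>x. \<Sum>i\<in>I. f i x)"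
  by (induction I rule: infinite_finite_induct) (auto intro: poly_fun.intros)

lemma poly_fun_prod: "(\<And>i. i \<in> I \<Longrightarrow> poly_fun (f i)) \<Longrightarrow> poly_fun (\<lambda>x. \<Prod>i\<in>I. f i x)"
  by (induction I rule: infinite_finite_induct) (auto intro: poly_fun.intros)

lemma poly_fun_power: "poly_fun f \<Longrightarrow> poly_fun (\<lambda>x. f x ^ n)"
  by (induction n) (auto intro: poly_fun.intros)

lemma poly_fun_minus: "poly_fun f \<Longrightarrow> poly_fun (\<lambda>x. - f x)"
  using poly_fun_mult[OF poly_fun_const[of "-1"]] by simp

lemma poly_fun_diff: "poly_fun f \<Longrightarrow> poly_fun g \<Longrightarrow> poly_fun (\<lambda>x. f x - g x)"
  using poly_fun_add[OF _ poly_fun_minus] by simp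

lemma poly_fun_if: "poly_fun f \<Longrightarrow> poly_fun g \<Longrightarrow> poly_fun (\<lambda>x. if P then f x else g x)"
  by (cases P) auto

lemma poly_fun_compose:
  "poly_fun f \<Longrightarrow> (\<And>w. poly_fun (g w)) \<Longrightarrow> poly_fun (\<lambda>x. f (\<lambda>w. g w x))"
  by (induction f rule: poly_fun.induct) (auto intro: poly_fun.intros)

lemma poly_fun_mpoly_eval: "poly_fun (mpoly_eval c)"
  unfolding mpoly_eval_def
  by (intro poly_fun_sum poly_fun_mult poly_fun_const poly_fun_prod poly_fun_power poly_fun_var)

lemma poly_fun_imp_mpoly_eval: "poly_fun f \<Longrightarrow> \<exists>c. f = mpoly_eval c"
proof (induction f rule: poly_fun.induct)
  case (poly_fun_const a)
  show ?case
    by (rule exI[of _ "Poly_Mapping.single 0 a"]) (simp add: mpoly_eval_single fun_eq_iff)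
next
  case (poly_fun_var v)
  show ?case
    by (rule exI[of _ "Poly_Mapping.single (Poly_Mapping.single v 1) 1"])
      (simp add: mpoly_eval_single monomial_eval_single fun_eq_iff)
next
  case (poly_fun_add f g)
  then show ?case by (metis mpoly_eval_add)
next
  case (poly_fun_mult f g)
  then obtain a b where ab: "f = mpoly_eval a" "g = mpoly_eval b" by blast
  let ?c = "\<Sum>(m1, m2)\<in>Poly_Mapping.keys a \<times> Poly_Mapping.keys b.
      Poly_Mapping.single (m1 + m2) (Poly_Mapping.lookup a m1 * Poly_Mapping.lookup b m2)"
  have "mpoly_eval ?c x = mpoly_eval a x * mpoly_eval b x" for x
  proof -
    have "mpoly_eval ?c x = (\<Sum>(m1, m2)\<in>Poly_Mapping.keys a \<times> Poly_Mapping.keys b.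
        (Poly_Mapping.lookup a m1 * monomial_eval m1 x) * (Poly_Mapping.lookup b m2 * monomial_eval m2 x))"
      by (simp add: mpoly_eval_sum mpoly_eval_single monomial_eval_add case_prod_beta mult_ac)
    then show ?thesis
      by (simp add: mpoly_eval_eq_sum_monomial_eval sum_product sum.cartesian_product case_prod_beta)
  qed
  then show ?case using ab by (intro exI[of _ ?c]) auto
qed

lemma poly_fun_on_line: "poly_fun f \<Longrightarrow> \<exists>q. \<forall>t. f (\<lambda>v. x v + t * w v) = poly q t"
proof (induction f rule: poly_fun.induct)
  case (poly_fun_const c)
  show ?case by (rule exI[of _ "[:c:]"]) simp
next
  case (poly_fun_var v)
  show ?case by (rule exI[of _ "[:x v, w v:]"]) (simp add: mult.commute)
next
  case (poly_fun_add f g)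
  then show ?case by (metis poly_add)
next
  case (poly_fun_mult f g)
  then show ?case by (metis poly_mult)
qed

lemma sum_powers_coeff_eq:
  fixes c c' :: "nat \<Rightarrow> 'a::{comm_ring,real_normed_div_algebra}"
  assumes "\<forall>y. (\<Sum>k\<le>d. c k * y ^ k) = (\<Sum>k\<le>d. c' k * y ^ k)" and "k \<le> d"
  shows "c k = c' k"
proof -
  have "\<forall>y. (\<Sum>k\<le>d. (c k - c' k) * y ^ k) = 0"
    using assms(1) by (simp add: left_diff_distrib sum_subtractf)
  then show ?thesis
    using assms(2) by (simp add: polyfun_eq_0)
qed

lemma sum_powers_coeff_eq_if:
  fixes a b :: "nat \<Rightarrow> 'a::{comm_ring,real_normed_div_algebra}"
  assumes "\<forall>t. (\<Sum>k\<le>D. a k * t ^ k) = (\<Sum>k\<le>M. b k * t ^ k)"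
  shows "(if k \<le> D then a k else 0) = (if k \<le> M then b k else 0)"
proof (cases "k \<le> max D M")
  case True
  have "(\<Sum>k\<le>max D M. (if k \<le> D then a k else 0) * t ^ k) = (\<Sum>k\<le>D. a k * t ^ k)"
    "(\<Sum>k\<le>max D M. (if k \<le> M then b k else 0) * t ^ k) = (\<Sum>k\<le>M. b k * t ^ k)" for t
    by (intro sum.mono_neutral_cong_right; auto)+
  then show ?thesis
    using assms True by (intro sum_powers_coeff_eq[where d = "max D M"]) auto
qed auto

definition indep_of :: "'v \<Rightarrow> (('v \<Rightarrow> real) \<Rightarrow> real) \<Rightarrow> bool" where
  "indep_of v f \<longleftrightarrow> (\<forall>x y. f (x(v := y)) = f x)"

definition var_expansion ::
    "'v \<Rightarrow> nat \<Rightarrow> (nat \<Rightarrow> ('v \<Rightarrow> real) \<Rightarrow> real) \<Rightarrow> (('v \<Rightarrow> real) \<Rightarrow> real) \<Rightarrow> bool" where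
  "var_expansion v d a f \<longleftrightarrow>
     (\<forall>k. poly_fun (a k) \<and> indep_of v (a k)) \<and> (\<forall>k>d. a k = (\<lambda>x. 0)) \<and>
     (\<forall>x. f x = (\<Sum>k\<le>d. a k x * x v ^ k))"

lemma var_expansion_mono:
  assumes "var_expansion v d a f" and "d \<le> D"
  shows "var_expansion v D a f"
proof -
  have "(\<Sum>k\<le>d. a k x * x v ^ k) = (\<Sum>k\<le>D. a k x * x v ^ k)" for x
    using assms by (intro sum.mono_neutral_left) (auto simp: var_expansion_def)
  then show ?thesis
    using assms by (auto simp: var_expansion_def)
qed

lemma var_expansion_add:
  assumes "var_expansion v d1 a1 f" and "var_expansion v d2 a2 g"
  shows "var_expansion v (max d1 d2) (\<lambda>k x. a1 k x + a2 k x) (\<lambda>x. f x + g x)"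
proof -
  have "var_expansion v (max d1 d2) a1 f" "var_expansion v (max d1 d2) a2 g"
    using assms by (auto intro: var_expansion_mono)
  then show ?thesis
    by (auto simp: var_expansion_def poly_fun_add distrib_right sum.distrib indep_of_def)
qed

lemma var_expansion_mult:
  assumes "var_expansion v d1 a1 f" and "var_expansion v d2 a2 g"
  shows "var_expansion v (d1 + d2)
           (\<lambda>k x. \<Sum>i\<le>d1. \<Sum>j\<le>d2. if i + j = k then a1 i x * a2 j x else 0) (\<lambda>x. f x * g x)"
proof -
  let ?a = "\<lambda>k x. \<Sum>i\<le>d1. \<Sum>j\<le>d2. if i + j = k then a1 i x * a2 j x else 0"
  have "f x * g x = (\<Sum>k\<le>d1 + d2. ?a k x * x v ^ k)" for x
  proof -
    have "(\<Sum>k\<le>d1 + d2. ?a k x * x v ^ k)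
        = (\<Sum>i\<le>d1. \<Sum>j\<le>d2. \<Sum>k\<le>d1 + d2. if i + j = k then a1 i x * a2 j x * x v ^ (i + j) else 0)"
      unfolding sum_distrib_right
      by (subst sum.swap, rule sum.cong[OF refl], subst sum.swap) (auto intro!: sum.cong)
    also have "\<dots> = (\<Sum>i\<le>d1. \<Sum>j\<le>d2. a1 i x * a2 j x * x v ^ (i + j))"
      by (intro sum.cong refl) auto
    also have "\<dots> = f x * g x"
      using assms by (simp add: var_expansion_def sum_product power_add mult_ac)
    finally show ?thesis by simp
  qed
  moreover have "poly_fun (?a k)" for k
    using assms by (auto simp: var_expansion_def intro!: poly_fun_sum poly_fun_if poly_fun_mult poly_fun_const)
  moreover have "indep_of v (?a k)" for k
  proof -
    have upd: "a1 i (x(v := y)) = a1 i x" "a2 i (x(v := y)) = a2 i x" for i x y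
      using assms by (auto simp: var_expansion_def indep_of_def)
    show ?thesis unfolding indep_of_def upd by simp
  qed
  ultimately show ?thesis
    by (auto simp: var_expansion_def)
qed

lemma poly_fun_var_expansion: "poly_fun f \<Longrightarrow> \<exists>d a. var_expansion v d a f"
proof (induction f rule: poly_fun.induct)
  case (poly_fun_const c)
  have "var_expansion v 0 (\<lambda>k x. if k = 0 then c else 0) (\<lambda>x. c)"
    by (auto simp: var_expansion_def indep_of_def intro: poly_fun.intros)
  then show ?case by blast
next
  case (poly_fun_var u)
  have "var_expansion v 1 (\<lambda>k x. if k = 1 then 1 else 0) (\<lambda>x. x u)" if "u = v"
    using that by (auto simp: var_expansion_def indep_of_def intro: poly_fun.intros)
  moreover have "var_expansion v 0 (\<lambda>k x. if k = 0 then x u else 0) (\<lambda>x. x u)" if "u \<noteq> v"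
    using that by (auto simp: var_expansion_def indep_of_def intro: poly_fun.intros poly_fun_if)
  ultimately show ?case by blast
next
  case (poly_fun_add f g)
  then show ?case by (blast intro: var_expansion_add)
next
  case (poly_fun_mult f g)
  then show ?case by (blast intro: var_expansion_mult)
qed

lemma var_expansion_coeff_eq:
  assumes "var_expansion v d a f" and "\<forall>z. f (x(v := z)) = f (y(v := z))"
  shows "a k x = a k y"
proof (cases "k \<le> d")
  case True
  have "f (x(v := z)) = (\<Sum>k\<le>d. a k x * z ^ k)" "f (y(v := z)) = (\<Sum>k\<le>d. a k y * z ^ k)" for z
    using assms(1) by (auto simp: var_expansion_def indep_of_def)
  then show ?thesis
    using assms(2) True by (intro sum_powers_coeff_eq[where d = d]) auto
next
  case False
  then show ?thesis
    using assms(1) by (simp add: var_expansion_def)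
qed

definition homog_part :: "nat \<Rightarrow> (('v \<Rightarrow>\<^sub>0 nat) \<Rightarrow>\<^sub>0 real) \<Rightarrow> ('v \<Rightarrow>\<^sub>0 nat) \<Rightarrow>\<^sub>0 real" where
  "homog_part K c = (\<Sum>m\<in>{m\<in>Poly_Mapping.keys c. monomial_degree m = K}.
     Poly_Mapping.single m (Poly_Mapping.lookup c m))"

lemma lookup_homog_part:
  "Poly_Mapping.lookup (homog_part K c) m = (if monomial_degree m = K then Poly_Mapping.lookup c m else 0)"
proof -
  have "Poly_Mapping.lookup (homog_part K c) m
      = (\<Sum>m'\<in>{m\<in>Poly_Mapping.keys c. monomial_degree m = K}. if m' = m then Poly_Mapping.lookup c m' else 0)"
    unfolding homog_part_def lookup_sum by (intro sum.cong refl) (simp add: lookup_single when_def)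
  then show ?thesis
    by (simp add: in_keys_iff)
qed

lemma homog_mpoly_homog_part: "homog_mpoly K (homog_part K c)"
  by (auto simp: homog_mpoly_def in_keys_iff lookup_homog_part monomial_degree_def split: if_splits)

lemma mpoly_eval_homog_part:
  assumes scale: "\<forall>s. mpoly_eval c (\<lambda>v. s * x v) = s ^ K * mpoly_eval c x"
  shows "mpoly_eval (homog_part K c) x = mpoly_eval c x"
proof -
  define B where "B = max K (\<Sum>m\<in>Poly_Mapping.keys c. monomial_degree m)"
  define g where "g k = (\<Sum>m\<in>Poly_Mapping.keys c.
      if monomial_degree m = k then Poly_Mapping.lookup c m * monomial_eval m x else 0)" for k
  have deg_le: "monomial_degree m \<le> B" if "m \<in> Poly_Mapping.keys c" for m
    using that member_le_sum[of m "Poly_Mapping.keys c" monomial_degree] by (simp add: B_def)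
  have "(\<Sum>k\<le>B. g k * s ^ k) = (\<Sum>k\<le>B. (if k = K then mpoly_eval c x else 0) * s ^ k)" for s
  proof -
    have "(\<Sum>k\<le>B. g k * s ^ k) = (\<Sum>m\<in>Poly_Mapping.keys c. \<Sum>k\<le>B.
        if monomial_degree m = k then Poly_Mapping.lookup c m * s ^ monomial_degree m * monomial_eval m x else 0)"
      unfolding g_def sum_distrib_right
      by (subst sum.swap) (intro sum.cong refl, simp add: mult_ac)
    also have "\<dots> = mpoly_eval c (\<lambda>v. s * x v)"
      using deg_le by (simp add: mpoly_eval_eq_sum_monomial_eval monomial_eval_scale mult.assoc)
    also have "\<dots> = (\<Sum>k\<le>B. (if k = K then mpoly_eval c x else 0) * s ^ k)"
    proof -
      have "(\<Sum>k\<le>B. (if k = K then mpoly_eval c x else 0) * s ^ k)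
          = (\<Sum>k\<le>B. if k = K then mpoly_eval c x * s ^ k else 0)"
        by (rule sum.cong) auto
      moreover have "K \<le> B" by (simp add: B_def)
      ultimately show ?thesis using scale by (simp add: mult.commute)
    qed
    finally show ?thesis .
  qed
  from sum_powers_coeff_eq[OF allI[OF this], of K] have "g K = mpoly_eval c x"
    by (simp add: B_def)
  moreover have "mpoly_eval (homog_part K c) x = g K"
    unfolding homog_part_def g_def
    by (simp add: mpoly_eval_sum sum.inter_filter) (intro sum.cong refl, simp add: mpoly_eval_single)
  ultimately show ?thesis by simp
qed

section \<open>Elementary symmetric functions\<close>

definition elem_sym_poly :: "'v set \<Rightarrow> ('v \<Rightarrow> real) \<Rightarrow> real poly" where
  "elem_sym_poly V x = (\<Prod>j\<in>V. [:x j, 1:])"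

text \<open>The coefficient of \<open>t ^ i\<close> in \<open>\<Prod>j\<in>V. t + x j\<close>, i.e. the elementary symmetric
  polynomial of degree \<open>card V - i\<close>.\<close>
definition elem_sym :: "'v set \<Rightarrow> ('v \<Rightarrow> real) \<Rightarrow> nat \<Rightarrow> real" where
  "elem_sym V x i = coeff (elem_sym_poly V x) i"

lemma elem_sym_empty: "elem_sym {} x i = (if i = 0 then 1 else 0)"
  by (simp add: elem_sym_def elem_sym_poly_def)

lemma elem_sym_insert:
  assumes "finite V" and "v \<notin> V"
  shows "elem_sym (insert v V) x i = x v * elem_sym V x i + (if i = 0 then 0 else elem_sym V x (i - 1))"
proof -
  have "elem_sym_poly (insert v V) x = smult (x v) (elem_sym_poly V x) + pCons 0 (elem_sym_poly V x)"
    using assms by (simp add: elem_sym_poly_def)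
  then show ?thesis
    by (cases i) (simp_all add: elem_sym_def)
qed

lemma poly_fun_elem_sym: "finite V \<Longrightarrow> poly_fun (\<lambda>x. elem_sym V x i)"
proof (induction V arbitrary: i rule: finite_induct)
  case empty
  then show ?case by (simp add: elem_sym_empty poly_fun_const)
next
  case (insert v V)
  then show ?case
    by (simp add: elem_sym_insert) (intro poly_fun_add poly_fun_mult poly_fun_var poly_fun_if poly_fun_const)
qed

lemma elem_sym_card: "finite V \<Longrightarrow> elem_sym V x (card V) = 1"
  and elem_sym_above_card: "finite V \<Longrightarrow> card V < i \<Longrightarrow> elem_sym V x i = 0"
proof (induction V arbitrary: i rule: finite_induct)
  case (insert v V)
  { case 1 then show ?case using insert by (simp add: elem_sym_insert) }
  { case 2 then show ?case using insert by (simp add: elem_sym_insert) }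
qed (simp_all add: elem_sym_empty)

lemma sum_elem_sym_powers:
  assumes "finite V"
  shows "(\<Sum>i\<le>card V. elem_sym V x i * t ^ i) = (\<Prod>j\<in>V. t + x j)"
proof -
  have "degree (elem_sym_poly V x) \<le> card V"
    using assms elem_sym_above_card[where x = x] by (intro degree_le) (auto simp: elem_sym_def)
  then have "(\<Sum>i\<le>card V. elem_sym V x i * t ^ i) = poly (elem_sym_poly V x) t"
    unfolding poly_altdef elem_sym_def by (intro sum.mono_neutral_right) (auto simp: coeff_eq_0)
  then show ?thesis
    by (simp add: elem_sym_poly_def poly_prod add.commute)
qed

lemma sum_elem_sym_root:
  "finite V \<Longrightarrow> j \<in> V \<Longrightarrow> (\<Sum>i\<le>card V. elem_sym V x i * (- x j) ^ i) = 0"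
  by (simp add: sum_elem_sym_powers) (rule bexI[of _ j], auto)

lemma elem_sym_permute: "\<sigma> permutes V \<Longrightarrow> elem_sym V (x \<circ> \<sigma>) = elem_sym V x"
  unfolding elem_sym_def elem_sym_poly_def
  using prod.reindex_bij_betw[OF permutes_imp_bij, of \<sigma> V "\<lambda>j. [:x j, 1:]"] by (simp add: fun_eq_iff)

lemma elem_sym_eq_if_prod_eq:
  assumes "\<forall>t. (\<Prod>j\<in>V. t + x j) = (\<Prod>j\<in>V. t + y j)"
  shows "elem_sym V x = elem_sym V y"
proof -
  have "poly (elem_sym_poly V x) = poly (elem_sym_poly V y)"
    using assms by (auto simp: elem_sym_poly_def poly_prod add.commute)
  then have "elem_sym_poly V x = elem_sym_poly V y"
    by (simp add: poly_eq_poly_eq_iff)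
  then show ?thesis
    by (simp add: elem_sym_def fun_eq_iff)
qed

text \<open>Synthetic division of \<open>\<Prod>j\<in>insert v V. t + x j\<close> by \<open>t + x v\<close>.\<close>
lemma elem_sym_remove:
  assumes "finite V" and "v \<notin> V"
  shows "elem_sym V x i = (\<Sum>l<card V + 1. (- x v) ^ l * elem_sym (insert v V) x (i + 1 + l))"
proof -
  have "elem_sym V x i = (\<Sum>l<n. (- x v) ^ l * elem_sym (insert v V) x (i + 1 + l))
      + (- x v) ^ n * elem_sym V x (i + n)" for n
  proof (induction n)
    case (Suc n)
    have "elem_sym (insert v V) x (i + 1 + n) = x v * elem_sym V x (i + 1 + n) + elem_sym V x (i + n)"
      using assms by (simp add: elem_sym_insert)
    then show ?case
      using Suc by (simp add: algebra_simps)
  qed simp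
  from this[of "card V + 1"] show ?thesis
    using assms by (simp add: elem_sym_above_card)
qed

text \<open>\<open>power_mod_coeff M k i e\<close> is the coefficient of \<open>y ^ i\<close> (\<open>i < M\<close>) in the remainder of
  \<open>y ^ k\<close> modulo the monic polynomial \<open>\<Sum>i\<le>M. e i * (- y) ^ i\<close>.\<close>
fun power_mod_coeff :: "nat \<Rightarrow> nat \<Rightarrow> nat \<Rightarrow> (nat \<Rightarrow> real) \<Rightarrow> real" where
  "power_mod_coeff M 0 i e = (if i = 0 then 1 else 0)"
| "power_mod_coeff M (Suc k) i e =
     (if i = 0 then 0 else power_mod_coeff M k (i - 1) e)
     + power_mod_coeff M k (M - 1) e * (- ((-1) ^ (M + i)) * e i)"

lemma poly_fun_power_mod_coeff: "poly_fun (power_mod_coeff M k i)"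
proof (induction k arbitrary: i)
  case 0
  have "poly_fun (\<lambda>e. if i = 0 then 1 else 0)"
    by (rule poly_fun_const)
  then show ?case by simp
next
  case (Suc k)
  have "poly_fun (\<lambda>e. (if i = 0 then 0 else power_mod_coeff M k (i - 1) e)
      + power_mod_coeff M k (M - 1) e * (- ((-1) ^ (M + i)) * e i))"
    using Suc by (intro poly_fun_add poly_fun_if poly_fun_mult poly_fun_const poly_fun_var)
  then show ?case by simp
qed

lemma power_eq_of_monic_root:
  fixes y :: real
  assumes "e M = 1" and "(\<Sum>i\<le>M. e i * (- y) ^ i) = 0"
  shows "y ^ M = (\<Sum>i<M. (- ((-1) ^ (M + i)) * e i) * y ^ i)"
proof -
  have sign: "(-1) ^ M * (- y) ^ i = (-1) ^ (M + i) * y ^ i" for i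
    by (simp add: power_minus[of y] power_add)
  have "(\<Sum>i<M. e i * (- y) ^ i) + (- y) ^ M = 0"
    using assms unfolding lessThan_Suc_atMost[symmetric] sum.lessThan_Suc by simp
  then have "(\<Sum>i<M. (-1) ^ M * (e i * (- y) ^ i)) + (-1) ^ M * (- y) ^ M = 0"
    by (metis distrib_left mult_zero_right sum_distrib_left)
  then have "(\<Sum>i<M. e i * ((-1) ^ (M + i) * y ^ i)) + y ^ M = 0"
    by (simp add: sign mult.left_commute power_add[symmetric])
  then show ?thesis
    by (simp add: sum_negf mult_ac)
qed

lemma power_eq_sum_power_mod_coeff:
  fixes y :: real
  assumes "0 < M" and "e M = 1" and "(\<Sum>i\<le>M. e i * (- y) ^ i) = 0"
  shows "y ^ k = (\<Sum>i<M. power_mod_coeff M k i e * y ^ i)"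
proof (induction k)
  case 0
  have "(\<Sum>i<M. power_mod_coeff M 0 i e * y ^ i) = (\<Sum>i<M. if i = 0 then 1 else 0)"
    by (intro sum.cong) auto
  then show ?case using \<open>0 < M\<close> by simp
next
  case (Suc k)
  obtain m where M: "M = Suc m" using \<open>0 < M\<close> gr0_implies_Suc by blast
  have shift: "(\<Sum>i<m. power_mod_coeff M k i e * y ^ Suc i)
      = (\<Sum>i<M. (if i = 0 then 0 else power_mod_coeff M k (i - 1) e) * y ^ i)"
    unfolding M sum.lessThan_Suc_shift by simp
  have "y ^ Suc k = y * (\<Sum>i<M. power_mod_coeff M k i e * y ^ i)"
    using Suc by simp
  also have "\<dots> = (\<Sum>i<m. power_mod_coeff M k i e * y ^ Suc i) + power_mod_coeff M k m e * y ^ M"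
    by (simp add: M sum_distrib_left distrib_left mult_ac)
  also have "\<dots> = (\<Sum>i<M. (if i = 0 then 0 else power_mod_coeff M k (i - 1) e) * y ^ i
      + power_mod_coeff M k m e * ((- ((-1) ^ (M + i)) * e i) * y ^ i))"
    unfolding shift power_eq_of_monic_root[OF assms(2,3)] sum_distrib_left sum.distrib ..
  also have "\<dots> = (\<Sum>i<M. power_mod_coeff M (Suc k) i e * y ^ i)"
    unfolding M by (simp add: distrib_right mult.assoc)
  finally show ?case .
qed

lemma finite_not_inj_on_line:
  fixes x w :: "'v \<Rightarrow> real"
  assumes "finite V" and "inj_on w V"
  shows "finite {t. \<not> inj_on (\<lambda>u. x u + t * w u) V}"
proof (rule finite_subset)
  show "finite ((\<lambda>(u1, u2). (x u2 - x u1) / (w u1 - w u2)) ` (V \<times> V))"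
    using assms(1) by simp
  show "{t. \<not> inj_on (\<lambda>u. x u + t * w u) V} \<subseteq> (\<lambda>(u1, u2). (x u2 - x u1) / (w u1 - w u2)) ` (V \<times> V)"
  proof
    fix t assume "t \<in> {t. \<not> inj_on (\<lambda>u. x u + t * w u) V}"
    then obtain u1 u2 where u: "u1 \<in> V" "u2 \<in> V" "u1 \<noteq> u2" "x u1 + t * w u1 = x u2 + t * w u2"
      by (auto simp: inj_on_def)
    then have "w u1 \<noteq> w u2"
      using assms(2) by (auto dest: inj_onD)
    then have "t = (x u2 - x u1) / (w u1 - w u2)"
      using u(4) by (simp add: field_simps)
    then show "t \<in> (\<lambda>(u1, u2). (x u2 - x u1) / (w u1 - w u2)) ` (V \<times> V)"
      using u(1,2) by auto
  qed
qed

text \<open>Points that are injective on \<open>V\<close> are Zariski dense: along a line through \<open>x\<close> in an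
  injective direction all but finitely many points are injective on \<open>V\<close>.\<close>
lemma poly_fun_eq_0_if_eq_0_on_inj:
  assumes "finite V" and "poly_fun \<phi>" and "\<And>x. inj_on x V \<Longrightarrow> \<phi> x = 0"
  shows "\<phi> x = 0"
proof -
  obtain h where "bij_betw h V {0..<card V}"
    using ex_bij_betw_finite_nat[OF assms(1)] by blast
  then have inj: "inj_on (\<lambda>u. real (h u)) V"
    by (auto simp: bij_betw_def inj_on_def)
  obtain q where q: "\<And>t. \<phi> (\<lambda>u. x u + t * real (h u)) = poly q t"
    using poly_fun_on_line[OF assms(2), of x "\<lambda>u. real (h u)"] by blast
  have "poly q t = 0" if "inj_on (\<lambda>u. x u + t * real (h u)) V" for t
    using assms(3)[OF that] q[of t] by simp
  then have "UNIV \<subseteq> {t. poly q t = 0} \<union> {t. \<not> inj_on (\<lambda>u. x u + t * real (h u)) V}"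
    by auto
  moreover have "\<not> finite (UNIV :: real set)"
    by (rule infinite_UNIV_char_0)
  ultimately have "\<not> finite {t. poly q t = 0}"
    using finite_not_inj_on_line[OF assms(1) inj] by (meson finite_UnI finite_subset)
  then have "q = 0"
    using poly_roots_finite by blast
  then show ?thesis
    using q[of 0] by simp
qed

lemma const_coeff_eq_if_distinct_roots:
  fixes s :: "nat \<Rightarrow> real"
  assumes "finite V" and "V \<noteq> {}" and "inj_on x V"
    and roots: "\<And>j. j \<in> V \<Longrightarrow> (\<Sum>i<card V. s i * x j ^ i) = c"
  shows "s 0 = c"
proof (rule ccontr)
  assume "s 0 \<noteq> c"
  have "card V > 0"
    using assms(1,2) by (simp add: card_gt_0_iff)
  define n where "n = card V - 1"
  define d where "d i = s i - (if i = 0 then c else 0)" for i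
  have atMost_n: "{..n} = {..<card V}"
    using \<open>card V > 0\<close> by (auto simp: n_def)
  have poly_d: "(\<Sum>i\<le>n. d i * z ^ i) = (\<Sum>i<card V. s i * z ^ i) - c" for z
    using \<open>card V > 0\<close> by (simp add: atMost_n d_def left_diff_distrib sum_subtractf if_distrib[of "\<lambda>u. u * _"] cong: if_cong)
  have "\<exists>k\<le>n. d k \<noteq> 0"
    using \<open>s 0 \<noteq> c\<close> by (auto simp: d_def)
  then have "finite {z. (\<Sum>i\<le>n. d i * z ^ i) = 0}" "card {z. (\<Sum>i\<le>n. d i * z ^ i) = 0} \<le> n"
    by (simp_all add: polyfun_rootbound_finite polyfun_rootbound_card)
  moreover have "x ` V \<subseteq> {z. (\<Sum>i\<le>n. d i * z ^ i) = 0}"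
    using roots by (auto simp: poly_d)
  ultimately have "card (x ` V) \<le> n"
    by (meson card_mono order_trans)
  then show False
    using card_image[OF assms(3)] \<open>card V > 0\<close> by (simp add: n_def)
qed

lemma poly_fun_pair_expansion:
  fixes G :: "('v \<Rightarrow> real) \<Rightarrow> real \<Rightarrow> real"
  assumes "poly_fun (\<lambda>z. G (\<lambda>i. z (Some i)) (z None))"
  shows "\<exists>D r. (\<forall>k. poly_fun (r k)) \<and> (\<forall>e y. G e y = (\<Sum>k\<le>D. r k e * y ^ k))"
proof -
  define emb where "emb e y = (\<lambda>z. case z of None \<Rightarrow> y | Some i \<Rightarrow> e i)" for e :: "'v \<Rightarrow> real" and y
  obtain D a where a: "var_expansion None D a (\<lambda>z. G (\<lambda>i. z (Some i)) (z None))"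
    using poly_fun_var_expansion[OF assms] by blast
  have "poly_fun (\<lambda>e. emb e 0 z)" for z
    by (cases z) (simp_all add: emb_def poly_fun_const poly_fun_var)
  moreover have "poly_fun (a k)" for k
    using a by (simp add: var_expansion_def)
  ultimately have "poly_fun (\<lambda>e. a k (emb e 0))" for k
    using poly_fun_compose[of "a k" "\<lambda>z e. emb e 0 z"] by blast
  moreover have "G e y = (\<Sum>k\<le>D. a k (emb e 0) * y ^ k)" for e y
  proof -
    have "a k ((emb e 0)(None := y)) = a k (emb e 0)" for k
      using a by (simp add: var_expansion_def indep_of_def)
    moreover have "(emb e 0)(None := y) = emb e y"
      by (auto simp: emb_def fun_eq_iff split: option.splits)
    ultimately have coeffs: "a k (emb e y) = a k (emb e 0)" for k
      by metis
    have "G e y = G (\<lambda>i. emb e y (Some i)) (emb e y None)"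
      by (simp add: emb_def)
    also have "\<dots> = (\<Sum>k\<le>D. a k (emb e y) * emb e y None ^ k)"
      using a by (simp add: var_expansion_def)
    also have "\<dots> = (\<Sum>k\<le>D. a k (emb e 0) * y ^ k)"
      unfolding coeffs by (simp add: emb_def)
    finally show ?thesis .
  qed
  ultimately show ?thesis
    by (intro exI[of _ D] exI[of _ "\<lambda>k e. a k (emb e 0)"]) auto
qed

definition depends_only_on :: "'v set \<Rightarrow> (('v \<Rightarrow> real) \<Rightarrow> real) \<Rightarrow> bool" where
  "depends_only_on V f \<longleftrightarrow> (\<forall>x y. (\<forall>u\<in>V. x u = y u) \<longrightarrow> f x = f y)"

definition symmetric_on :: "'v set \<Rightarrow> (('v \<Rightarrow> real) \<Rightarrow> real) \<Rightarrow> bool" where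
  "symmetric_on V f \<longleftrightarrow> (\<forall>\<sigma> x. \<sigma> permutes V \<longrightarrow> f (x \<circ> \<sigma>) = f x)"

lemma symmetric_on_subset: "symmetric_on W f \<Longrightarrow> V \<subseteq> W \<Longrightarrow> symmetric_on V f"
  by (auto simp: symmetric_on_def intro: permutes_subset)

lemma var_expansion_coeff_depends_only_on:
  assumes "var_expansion v d a f" and "depends_only_on V f"
  shows "depends_only_on (V - {v}) (a k)"
  unfolding depends_only_on_def
proof (intro allI impI)
  fix x y :: "'a \<Rightarrow> real" assume "\<forall>u\<in>V - {v}. x u = y u"
  then have "\<forall>z. f (x(v := z)) = f (y(v := z))"
    using assms(2) unfolding depends_only_on_def by auto
  then show "a k x = a k y"
    by (rule var_expansion_coeff_eq[OF assms(1)])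
qed

lemma var_expansion_coeff_symmetric_on:
  assumes "var_expansion v d a f" and "symmetric_on V f" and "v \<notin> V"
  shows "symmetric_on V (a k)"
  unfolding symmetric_on_def
proof (intro allI impI)
  fix \<sigma> and x :: "'a \<Rightarrow> real" assume \<sigma>: "\<sigma> permutes V"
  have "\<sigma> u = v \<longleftrightarrow> u = v" for u
    using permutes_not_in[OF \<sigma> assms(3)] permutes_inj[OF \<sigma>] by (metis injD)
  then have "(x \<circ> \<sigma>)(v := z) = x(v := z) \<circ> \<sigma>" for z
    by (auto simp: fun_eq_iff)
  then have "\<forall>z. f ((x \<circ> \<sigma>)(v := z)) = f (x(v := z))"
    using assms(2) \<sigma> by (simp add: symmetric_on_def)
  then show "a k (x \<circ> \<sigma>) = a k x"
    by (rule var_expansion_coeff_eq[OF assms(1)])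
qed

lemma symmetric_on_elem_sym_eval_swap:
  assumes "symmetric_on V p" and "\<And>x. p x = G (elem_sym V x) (x v)" and "v \<in> V" and "j \<in> V"
  shows "p x = G (elem_sym V x) (x j)"
proof -
  have \<tau>: "Transposition.transpose v j permutes V"
    using assms(3,4) by (rule permutes_swap_id)
  then have "p x = p (x \<circ> Transposition.transpose v j)"
    using assms(1) by (simp add: symmetric_on_def)
  also have "\<dots> = G (elem_sym V x) (x j)"
    by (simp add: assms(2) elem_sym_permute[OF \<tau>])
  finally show ?thesis .
qed

text \<open>Reducing modulo \<open>\<Prod>j\<in>V. t + x j\<close> leaves a polynomial of degree \<open>< card V\<close> in \<open>x j\<close>
  which takes the value \<open>p x\<close> at the \<open>card V\<close> points \<open>x j\<close>; for injective \<open>x\<close> it is therefore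
  constant.\<close>
lemma elem_sym_factorization_of_root_expansion:
  assumes "finite V" and "V \<noteq> {}" and "poly_fun p" and r: "\<And>k. poly_fun (r k)"
    and p: "\<And>x j. j \<in> V \<Longrightarrow> p x = (\<Sum>k\<le>D. r k (elem_sym V x) * x j ^ k)"
  shows "\<exists>Q. poly_fun Q \<and> (\<forall>x. p x = Q (elem_sym V x))"
proof -
  define s where "s i e = (\<Sum>k\<le>D. r k e * power_mod_coeff (card V) k i e)" for i e
  have "poly_fun (s 0)"
    unfolding s_def by (intro poly_fun_sum poly_fun_mult r poly_fun_power_mod_coeff)
  have reduced: "p x = (\<Sum>i<card V. s i (elem_sym V x) * x j ^ i)" if "j \<in> V" for x j
  proof -
    have "card V > 0"
      using assms(1,2) by (simp add: card_gt_0_iff)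
    then have powers: "x j ^ k = (\<Sum>i<card V. power_mod_coeff (card V) k i (elem_sym V x) * x j ^ i)" for k
      by (rule power_eq_sum_power_mod_coeff[OF _ elem_sym_card[OF assms(1)] sum_elem_sym_root[OF assms(1) that]])
    have "p x = (\<Sum>k\<le>D. \<Sum>i<card V.
        r k (elem_sym V x) * power_mod_coeff (card V) k i (elem_sym V x) * x j ^ i)"
      unfolding p[OF that] by (subst powers) (simp add: sum_distrib_left mult.assoc)
    also have "\<dots> = (\<Sum>i<card V. s i (elem_sym V x) * x j ^ i)"
      unfolding s_def sum_distrib_right by (rule sum.swap)
    finally show ?thesis .
  qed
  have "p x - s 0 (elem_sym V x) = 0" for x
  proof (rule poly_fun_eq_0_if_eq_0_on_inj[OF assms(1), where \<phi> = "\<lambda>x. p x - s 0 (elem_sym V x)"])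
    show "poly_fun (\<lambda>x. p x - s 0 (elem_sym V x))"
      using poly_fun_compose[OF \<open>poly_fun (s 0)\<close> poly_fun_elem_sym[OF assms(1)]]
      by (intro poly_fun_diff assms(3)) simp
    show "p x - s 0 (elem_sym V x) = 0" if "inj_on x V" for x
    proof -
      have "(\<Sum>i<card V. s i (elem_sym V x) * x j ^ i) = p x" if "j \<in> V" for j
        using reduced[OF that] by simp
      from const_coeff_eq_if_distinct_roots[OF assms(1,2) \<open>inj_on x V\<close> this] show ?thesis
        by simp
    qed
  qed
  then show ?thesis
    using \<open>poly_fun (s 0)\<close> by (intro exI[of _ "s 0"]) simp
qed

text \<open>The coefficients of \<open>p\<close> as a polynomial in \<open>x v\<close> are symmetric in \<open>V\<close>, hence by induction
  functions of \<open>elem_sym V x\<close>, which synthetic division expresses through \<open>elem_sym (insert v V) x\<close>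
  and \<open>x v\<close>. By symmetry \<open>x v\<close> may then be replaced by any \<open>x j\<close>.\<close>
lemma elem_sym_factorization_insert:
  assumes "finite V" and "v \<notin> V"
    and IH: "\<And>q. poly_fun q \<Longrightarrow> depends_only_on V q \<Longrightarrow> symmetric_on V q \<Longrightarrow>
               \<exists>Q. poly_fun Q \<and> (\<forall>x. q x = Q (elem_sym V x))"
    and p: "poly_fun p" "depends_only_on (insert v V) p" "symmetric_on (insert v V) p"
  shows "\<exists>Q. poly_fun Q \<and> (\<forall>x. p x = Q (elem_sym (insert v V) x))"
proof -
  obtain d a where a: "var_expansion v d a p"
    using poly_fun_var_expansion[OF p(1)] by blast
  have "\<exists>Q. poly_fun Q \<and> (\<forall>x. a k x = Q (elem_sym V x))" for k
  proof (rule IH)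
    show "poly_fun (a k)"
      using a by (simp add: var_expansion_def)
    show "depends_only_on V (a k)"
      using var_expansion_coeff_depends_only_on[OF a p(2)] assms(2) by simp
    show "symmetric_on V (a k)"
      using var_expansion_coeff_symmetric_on[OF a symmetric_on_subset[OF p(3)] assms(2)] by blast
  qed
  then obtain Q where Q: "\<And>k. poly_fun (Q k)" "\<And>k x. a k x = Q k (elem_sym V x)"
    by metis
  define G where "G e y = (\<Sum>k\<le>d. Q k (\<lambda>i. \<Sum>l<card V + 1. (- y) ^ l * e (i + 1 + l)) * y ^ k)"
    for e :: "nat \<Rightarrow> real" and y
  have at_v: "p x = G (elem_sym (insert v V) x) (x v)" for x
  proof -
    have "elem_sym V x = (\<lambda>i. \<Sum>l<card V + 1. (- x v) ^ l * elem_sym (insert v V) x (i + 1 + l))"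
      using elem_sym_remove[OF assms(1,2)] by blast
    then show ?thesis
      using a by (simp only: var_expansion_def G_def Q(2))
  qed
  have at_j: "p x = G (elem_sym (insert v V) x) (x j)" if "j \<in> insert v V" for x j
    using symmetric_on_elem_sym_eval_swap[OF p(3) at_v _ that] by simp
  have "poly_fun (\<lambda>z. G (\<lambda>i. z (Some i)) (z None))"
    unfolding G_def
    by (intro poly_fun_sum poly_fun_mult poly_fun_power poly_fun_var
        poly_fun_compose[OF Q(1)] poly_fun_minus)
  then obtain D r where "\<And>k. poly_fun (r k)" "\<And>e y. G e y = (\<Sum>k\<le>D. r k e * y ^ k)"
    using poly_fun_pair_expansion by blast
  then show ?thesis
    using assms(1) p(1) at_j by (intro elem_sym_factorization_of_root_expansion) auto
qed

theorem symmetric_poly_fun_elem_sym_factorization: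
  assumes "finite V" and "poly_fun p" and "depends_only_on V p" and "symmetric_on V p"
  shows "\<exists>Q. poly_fun Q \<and> (\<forall>x. p x = Q (elem_sym V x))"
  using assms(1-4)
proof (induction V arbitrary: p rule: finite_induct)
  case empty
  then have "p x = p (\<lambda>_. 0)" for x
    by (simp add: depends_only_on_def)
  then show ?case
    by (intro exI[of _ "\<lambda>_. p (\<lambda>_. 0)"]) (simp add: poly_fun_const)
next
  case (insert v V)
  then show ?case
    by (intro elem_sym_factorization_insert) auto
qed

section \<open>Hyperbolic polynomials and their cones\<close>

locale hyperbolic_on =
  fixes D :: "'a::euclidean_space set" and f :: "'a \<Rightarrow> real" and e :: 'a and \<mu> :: "'a \<Rightarrow> real^'j"
  assumes subspace: "subspace D" and e_in: "e \<in> D" and continuous: "continuous_on D f"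
    and f_e_pos: "0 < f e"
    and homogeneous: "\<And>c x. x \<in> D \<Longrightarrow> f (c *\<^sub>R x) = c ^ CARD('j) * f x"
    and eigenvalues: "\<And>t x. x \<in> D \<Longrightarrow> f (t *\<^sub>R e + x) = f e * (\<Prod>j\<in>UNIV. t + \<mu> x $ j)"
begin

definition eigen_cone :: "'a set" where
  "eigen_cone = {x \<in> D. \<forall>j. 0 < \<mu> x $ j}"

lemma in_D_shift: "x \<in> D \<Longrightarrow> t *\<^sub>R e + x \<in> D"
  using subspace e_in by (simp add: subspace_add subspace_scale)

lemma eigen_cone_iff_ray: "x \<in> eigen_cone \<longleftrightarrow> x \<in> D \<and> (\<forall>t\<ge>0. f (t *\<^sub>R e + x) \<noteq> 0)"
proof (cases "x \<in> D")
  case True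
  have "(\<forall>j. 0 < \<mu> x $ j) \<longleftrightarrow> (\<forall>t\<ge>0. (\<Prod>j\<in>UNIV. t + \<mu> x $ j) \<noteq> 0)"
  proof
    assume "\<forall>j. 0 < \<mu> x $ j"
    then show "\<forall>t\<ge>0. (\<Prod>j\<in>UNIV. t + \<mu> x $ j) \<noteq> 0"
      by (smt (verit) prod_pos)
  next
    assume nz: "\<forall>t\<ge>0. (\<Prod>j\<in>UNIV. t + \<mu> x $ j) \<noteq> 0"
    show "\<forall>j. 0 < \<mu> x $ j"
    proof (rule ccontr)
      assume "\<not> (\<forall>j. 0 < \<mu> x $ j)"
      then obtain j where "\<mu> x $ j \<le> 0"
        by (auto simp: not_less)
      moreover have "(\<Prod>j'\<in>UNIV. - \<mu> x $ j + \<mu> x $ j') = 0"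
        by (rule prod_zero) auto
      ultimately show False
        using nz[rule_format, of "- \<mu> x $ j"] by simp
    qed
  qed
  then show ?thesis
    using True f_e_pos by (simp add: eigen_cone_def eigenvalues)
qed (simp add: eigen_cone_def)

lemma eigen_cone_subset: "eigen_cone \<subseteq> {x \<in> D. f x \<noteq> 0}"
  using eigen_cone_iff_ray[of x for x] by (force simp: eigen_cone_iff_ray)

lemma e_in_eigen_cone: "e \<in> eigen_cone"
proof -
  have "t *\<^sub>R e + e = (t + 1) *\<^sub>R e" for t
    by (simp add: algebra_simps)
  then show ?thesis
    using e_in f_e_pos by (simp add: eigen_cone_iff_ray homogeneous)
qed

lemma connected_eigen_cone: "connected eigen_cone"
proof (rule starlike_imp_connected, unfold starlike_def, intro bexI[OF _ e_in_eigen_cone] ballI subsetI)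
  fix x y assume x: "x \<in> eigen_cone" and "y \<in> closed_segment e x"
  then obtain u where u: "0 \<le> u" "u \<le> 1" "y = (1 - u) *\<^sub>R e + u *\<^sub>R x"
    by (auto simp: closed_segment_def)
  have "x \<in> D"
    using x by (simp add: eigen_cone_def)
  have "f (t *\<^sub>R e + y) \<noteq> 0" if "t \<ge> 0" for t
  proof (cases "u = 0")
    case True
    then show ?thesis
      using e_in_eigen_cone that by (simp add: eigen_cone_iff_ray u(3))
  next
    case False
    define s where "s = (t + 1 - u) / u"
    have "u * s = t + 1 - u"
      using False by (simp add: s_def)
    have "t *\<^sub>R e + y = (t + 1 - u) *\<^sub>R e + u *\<^sub>R x"
      by (simp add: u(3) algebra_simps)
    also have "\<dots> = u *\<^sub>R (s *\<^sub>R e + x)"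
      by (simp add: \<open>u * s = t + 1 - u\<close>[symmetric] scaleR_add_right)
    finally have "t *\<^sub>R e + y = u *\<^sub>R (s *\<^sub>R e + x)" .
    moreover have "s \<ge> 0"
      using False u that by (simp add: s_def)
    ultimately show ?thesis
      using x False \<open>x \<in> D\<close> by (simp add: eigen_cone_iff_ray homogeneous in_D_shift)
  qed
  moreover have "y \<in> D"
    using u(3) subspace e_in \<open>x \<in> D\<close> by (simp add: subspace_add subspace_scale)
  ultimately show "y \<in> eigen_cone"
    by (simp add: eigen_cone_iff_ray)
qed

lemma not_in_eigen_cone_iff_segment_zero:
  assumes "x \<in> D"
  shows "x \<notin> eigen_cone \<longleftrightarrow> (\<exists>u\<in>{0..1}. f (u *\<^sub>R e + (1 - u) *\<^sub>R x) = 0)"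
proof
  assume "x \<notin> eigen_cone"
  then obtain t where t: "t \<ge> 0" "f (t *\<^sub>R e + x) = 0"
    using assms by (auto simp: eigen_cone_iff_ray)
  define u where "u = t / (1 + t)"
  have "u *\<^sub>R e + (1 - u) *\<^sub>R x = (1 / (1 + t)) *\<^sub>R (t *\<^sub>R e + x)"
    using t(1) by (simp add: u_def scaleR_add_right field_simps)
  then have "f (u *\<^sub>R e + (1 - u) *\<^sub>R x) = 0"
    using t assms by (simp add: homogeneous in_D_shift)
  moreover have "u \<in> {0..1}"
    using t(1) by (simp add: u_def)
  ultimately show "\<exists>u\<in>{0..1}. f (u *\<^sub>R e + (1 - u) *\<^sub>R x) = 0" ..
next
  assume "\<exists>u\<in>{0..1}. f (u *\<^sub>R e + (1 - u) *\<^sub>R x) = 0"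
  then obtain u where u: "0 \<le> u" "u \<le> 1" "f (u *\<^sub>R e + (1 - u) *\<^sub>R x) = 0"
    by auto
  have "u \<noteq> 1"
    using u(3) f_e_pos by auto
  define t where "t = u / (1 - u)"
  have "u *\<^sub>R e + (1 - u) *\<^sub>R x = (1 - u) *\<^sub>R (t *\<^sub>R e + x)"
    using \<open>u \<noteq> 1\<close> by (simp add: t_def scaleR_add_right)
  then have "f (t *\<^sub>R e + x) = 0"
    using u \<open>u \<noteq> 1\<close> assms by (simp add: homogeneous in_D_shift)
  moreover have "t \<ge> 0"
    using u \<open>u \<noteq> 1\<close> by (simp add: t_def)
  ultimately show "x \<notin> eigen_cone"
    by (auto simp: eigen_cone_iff_ray)
qed

lemma closed_segment_zeros: "closed {x \<in> D. \<exists>u\<in>{0..1}. f (u *\<^sub>R e + (1 - u) *\<^sub>R x) = 0}"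
proof -
  let ?g = "\<lambda>z. fst z *\<^sub>R e + (1 - fst z) *\<^sub>R snd z"
  have "closed {z \<in> {0..1::real} \<times> D. f (?g z) = 0}"
  proof (rule continuous_closed_preimage_constant)
    show "closed ({0..1::real} \<times> D)"
      by (intro closed_Times closed_subspace[OF subspace]) simp
    have "?g ` ({0..1} \<times> D) \<subseteq> D"
      using subspace e_in by (auto simp: subspace_add subspace_scale)
    then show "continuous_on ({0..1::real} \<times> D) (\<lambda>z. f (?g z))"
      by (intro continuous_on_compose2[OF continuous] continuous_intros)
  qed
  from closed_compact_projection[OF compact_Icc this]
  have "closed {x. \<exists>u. u \<in> {0..1} \<and> (u, x) \<in> {z \<in> {0..1} \<times> D. f (?g z) = 0}}" .
  moreover have "{x. \<exists>u. u \<in> {0..1} \<and> (u, x) \<in> {z \<in> {0..1} \<times> D. f (?g z) = 0}}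
      = {x \<in> D. \<exists>u\<in>{0..1}. f (u *\<^sub>R e + (1 - u) *\<^sub>R x) = 0}"
    by auto
  ultimately show ?thesis by simp
qed

lemma closed_ray_lower_bound:
  "closed {x \<in> D. \<forall>t>0. f e * t ^ CARD('j) \<le> f (t *\<^sub>R e + x)}"
proof -
  have "closed (D \<inter> (\<Inter>t\<in>{0<..}. {x \<in> D. f e * t ^ CARD('j) \<le> f (t *\<^sub>R e + x)}))"
  proof (intro closed_Int closed_subspace[OF subspace] closed_INT ballI
      continuous_on_closed_Collect_le continuous_intros)
    fix t :: real
    show "continuous_on D (\<lambda>x. f (t *\<^sub>R e + x))"
      using in_D_shift by (intro continuous_on_compose2[OF continuous] continuous_intros) auto
  qed
  moreover have "D \<inter> (\<Inter>t\<in>{0<..}. {x \<in> D. f e * t ^ CARD('j) \<le> f (t *\<^sub>R e + x)})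
      = {x \<in> D. \<forall>t>0. f e * t ^ CARD('j) \<le> f (t *\<^sub>R e + x)}"
    by auto
  ultimately show ?thesis by simp
qed

lemma eigen_cone_eq_ray_lower_bound:
  "eigen_cone = {x \<in> D. f x \<noteq> 0} \<inter> {x \<in> D. \<forall>t>0. f e * t ^ CARD('j) \<le> f (t *\<^sub>R e + x)}"
proof (intro equalityI subsetI IntI)
  fix x assume x: "x \<in> eigen_cone"
  then show "x \<in> {x \<in> D. f x \<noteq> 0}"
    using eigen_cone_subset by blast
  have "f e * t ^ CARD('j) \<le> f (t *\<^sub>R e + x)" if "t > 0" for t
  proof -
    have "(\<Prod>j\<in>(UNIV::'j set). t) \<le> (\<Prod>j\<in>UNIV. t + \<mu> x $ j)"
      using that x by (intro prod_mono) (auto simp: eigen_cone_def less_imp_le)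
    then show ?thesis
      using x f_e_pos by (simp add: eigen_cone_def eigenvalues)
  qed
  then show "x \<in> {x \<in> D. \<forall>t>0. f e * t ^ CARD('j) \<le> f (t *\<^sub>R e + x)}"
    using x by (simp add: eigen_cone_def)
next
  fix x assume x: "x \<in> {x \<in> D. f x \<noteq> 0} \<inter> {x \<in> D. \<forall>t>0. f e * t ^ CARD('j) \<le> f (t *\<^sub>R e + x)}"
  have "f (t *\<^sub>R e + x) \<noteq> 0" if "t \<ge> 0" for t
  proof (cases "t = 0")
    case False
    then have "0 < f e * t ^ CARD('j)"
      using that f_e_pos by simp
    moreover have "f e * t ^ CARD('j) \<le> f (t *\<^sub>R e + x)"
      using x that False by simp
    ultimately show ?thesis
      by linarith
  qed (use x in simp)
  then show "x \<in> eigen_cone"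
    using x by (simp add: eigen_cone_iff_ray)
qed

text \<open>The cone is connected, contains \<open>e\<close> and is relatively clopen in \<open>{x \<in> D. f x \<noteq> 0}\<close>.\<close>
theorem connected_component_eq_eigen_cone:
  "connected_component_set {x \<in> D. f x \<noteq> 0} e = eigen_cone"
proof
  show "eigen_cone \<subseteq> connected_component_set {x \<in> D. f x \<noteq> 0} e"
    by (rule connected_component_maximal[OF e_in_eigen_cone connected_eigen_cone eigen_cone_subset])
  define C where "C = connected_component_set {x \<in> D. f x \<noteq> 0} e"
  have C: "C \<subseteq> {x \<in> D. f x \<noteq> 0}"
    unfolding C_def by (rule connected_component_subset)
  have "C \<inter> eigen_cone = C \<inter> - {x \<in> D. \<exists>u\<in>{0..1}. f (u *\<^sub>R e + (1 - u) *\<^sub>R x) = 0}"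
    using C not_in_eigen_cone_iff_segment_zero eigen_cone_subset by blast
  then have "openin (top_of_set C) (C \<inter> eigen_cone)"
    using closed_segment_zeros by (simp add: openin_open_Int open_Compl)
  moreover have "C \<inter> eigen_cone = C \<inter> {x \<in> D. \<forall>t>0. f e * t ^ CARD('j) \<le> f (t *\<^sub>R e + x)}"
    using C eigen_cone_eq_ray_lower_bound by blast
  then have "closedin (top_of_set C) (C \<inter> eigen_cone)"
    using closed_ray_lower_bound by (simp add: closedin_closed_Int)
  moreover have "C \<inter> eigen_cone \<noteq> {}"
    using e_in_eigen_cone eigen_cone_subset connected_component_refl_eq[of "{x \<in> D. f x \<noteq> 0}" e]
    unfolding C_def by blast
  ultimately have "C \<inter> eigen_cone = C"
    using connected_connected_component unfolding C_def connected_clopen by blast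
  then show "C \<subseteq> eigen_cone" by blast
qed

end

definition same_char_poly :: "real^'j \<Rightarrow> real^'j \<Rightarrow> bool" where
  "same_char_poly x y \<longleftrightarrow> (\<forall>t. (\<Prod>j\<in>UNIV. t + x $ j) = (\<Prod>j\<in>UNIV. t + y $ j))"

lemma symmetric_mpoly_elem_sym_factorization:
  fixes p :: "real^'m \<Rightarrow> real"
  assumes "\<forall>x. p x = mpoly_eval c (\<lambda>i. x $ i)"
    and "\<forall>\<sigma> x. \<sigma> permutes UNIV \<longrightarrow> p (\<chi> i. x $ \<sigma> i) = p x"
  shows "\<exists>Q. poly_fun Q \<and> (\<forall>x. p x = Q (elem_sym UNIV (\<lambda>i. x $ i)))"
proof -
  have "mpoly_eval c (x \<circ> \<sigma>) = mpoly_eval c x" if "\<sigma> permutes UNIV" for \<sigma> x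
  proof -
    have "mpoly_eval c (x \<circ> \<sigma>) = p (\<chi> i. (\<chi> i. x i) $ \<sigma> i)"
      using assms(1) by (simp add: comp_def)
    also have "\<dots> = p (\<chi> i. x i)"
      using assms(2) that by blast
    also have "\<dots> = mpoly_eval c x"
      using assms(1) by simp
    finally show ?thesis .
  qed
  then have "symmetric_on UNIV (mpoly_eval c)"
    by (simp add: symmetric_on_def)
  moreover have "depends_only_on UNIV (mpoly_eval c)"
    by (simp add: depends_only_on_def fun_eq_iff[symmetric])
  ultimately obtain Q where "poly_fun Q" "\<forall>z. mpoly_eval c z = Q (elem_sym UNIV z)"
    using symmetric_poly_fun_elem_sym_factorization[OF finite poly_fun_mpoly_eval] by blast
  then show ?thesis
    using assms(1) by auto
qed

lemma symmetric_mpoly_eq_if_same_char_poly: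
  fixes p :: "real^'m \<Rightarrow> real"
  assumes "\<forall>x. p x = mpoly_eval c (\<lambda>i. x $ i)"
    and "\<forall>\<sigma> x. \<sigma> permutes UNIV \<longrightarrow> p (\<chi> i. x $ \<sigma> i) = p x"
    and "same_char_poly x y"
  shows "p x = p y"
proof -
  obtain Q where "\<forall>x. p x = Q (elem_sym UNIV (\<lambda>i. x $ i))"
    using symmetric_mpoly_elem_sym_factorization[OF assms(1,2)] by blast
  moreover have "elem_sym UNIV (\<lambda>i. x $ i) = elem_sym UNIV (\<lambda>i. y $ i)"
    using assms(3) by (intro elem_sym_eq_if_prod_eq) (simp add: same_char_poly_def)
  ultimately show ?thesis by simp
qed

context hyperbolic_on
begin

lemma same_char_poly_eigenvalues_e: "same_char_poly (\<mu> e) (vec 1)"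
proof -
  have "f e * (\<Prod>j\<in>UNIV. t + \<mu> e $ j) = f e * (\<Prod>j\<in>UNIV. t + (vec 1 :: real^'j) $ j)" for t
  proof -
    have "f e * (\<Prod>j\<in>UNIV. t + \<mu> e $ j) = f (t *\<^sub>R e + e)"
      using e_in by (simp add: eigenvalues)
    also have "\<dots> = f ((t + 1) *\<^sub>R e)"
      by (simp add: algebra_simps)
    also have "\<dots> = f e * (\<Prod>j\<in>UNIV. t + (vec 1 :: real^'j) $ j)"
      using e_in by (simp add: homogeneous mult.commute)
    finally show ?thesis .
  qed
  then show ?thesis
    using f_e_pos by (simp add: same_char_poly_def)
qed

lemma same_char_poly_eigenvalues_shift:
  assumes "x \<in> D"
  shows "same_char_poly (\<mu> (s *\<^sub>R e + x)) (s *\<^sub>R vec 1 + \<mu> x)"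
proof -
  have "f e * (\<Prod>j\<in>UNIV. t + \<mu> (s *\<^sub>R e + x) $ j) = f e * (\<Prod>j\<in>UNIV. t + (s *\<^sub>R vec 1 + \<mu> x) $ j)" for t
  proof -
    have "f e * (\<Prod>j\<in>UNIV. t + \<mu> (s *\<^sub>R e + x) $ j) = f (t *\<^sub>R e + (s *\<^sub>R e + x))"
      using assms by (simp add: eigenvalues in_D_shift)
    also have "\<dots> = f ((t + s) *\<^sub>R e + x)"
      by (simp add: algebra_simps)
    also have "\<dots> = f e * (\<Prod>j\<in>UNIV. t + (s *\<^sub>R vec 1 + \<mu> x) $ j)"
      using assms by (simp add: eigenvalues add.assoc)
    finally show ?thesis .
  qed
  then show ?thesis
    using f_e_pos by (simp add: same_char_poly_def)
qed

lemma same_char_poly_eigenvalues_scale: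
  assumes "x \<in> D"
  shows "same_char_poly (\<mu> (c *\<^sub>R x)) (c *\<^sub>R \<mu> x)"
proof -
  have "f e * (\<Prod>j\<in>UNIV. t + \<mu> (c *\<^sub>R x) $ j) = f e * (\<Prod>j\<in>UNIV. t + (c *\<^sub>R \<mu> x) $ j)" for t
  proof -
    have "f e * (\<Prod>j\<in>UNIV. t + \<mu> (c *\<^sub>R x) $ j) = f (t *\<^sub>R e + c *\<^sub>R x)"
      using subspace assms by (simp add: subspace_scale eigenvalues)
    also have "\<dots> = f e * (\<Prod>j\<in>UNIV. t + (c *\<^sub>R \<mu> x) $ j)"
    proof (cases "c = 0")
      case True
      then show ?thesis
        using e_in by (simp add: homogeneous mult.commute)
    next
      case False
      have "t *\<^sub>R e + c *\<^sub>R x = c *\<^sub>R ((t / c) *\<^sub>R e + x)"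
        using False by (simp add: scaleR_add_right)
      then have "f (t *\<^sub>R e + c *\<^sub>R x) = f e * ((\<Prod>j\<in>(UNIV::'j set). c) * (\<Prod>j\<in>UNIV. t / c + \<mu> x $ j))"
        using assms by (simp add: homogeneous in_D_shift eigenvalues)
      also have "(\<Prod>j\<in>(UNIV::'j set). c) * (\<Prod>j\<in>UNIV. t / c + \<mu> x $ j) = (\<Prod>j\<in>UNIV. c * (t / c + \<mu> x $ j))"
        by (simp add: prod.distrib)
      also have "\<dots> = (\<Prod>j\<in>UNIV. t + (c *\<^sub>R \<mu> x) $ j)"
        using False by (simp add: distrib_left)
      finally show ?thesis .
    qed
    finally show ?thesis .
  qed
  then show ?thesis
    using f_e_pos by (simp add: same_char_poly_def)
qed

lemma homogeneous_compose:
  fixes p :: "real^'j \<Rightarrow> real" and \<Lambda> :: "real^'j \<Rightarrow> real^'k"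
  assumes "hyperbolic_on UNIV p (vec 1) \<Lambda>"
    and "\<And>x y. same_char_poly x y \<Longrightarrow> p x = p y"
    and "x \<in> D"
  shows "p (\<mu> (c *\<^sub>R x)) = c ^ CARD('k) * p (\<mu> x)"
  using assms(2)[OF same_char_poly_eigenvalues_scale[OF assms(3)]] hyperbolic_on.homogeneous[OF assms(1)]
  by simp

lemma hyperbolic_on_compose:
  fixes p :: "real^'j \<Rightarrow> real" and \<Lambda> :: "real^'j \<Rightarrow> real^'k"
  assumes p: "hyperbolic_on UNIV p (vec 1) \<Lambda>"
    and p_char: "\<And>x y. same_char_poly x y \<Longrightarrow> p x = p y"
    and cont: "continuous_on D (\<lambda>x. p (\<mu> x))"
  shows "hyperbolic_on D (\<lambda>x. p (\<mu> x)) e (\<lambda>x. \<Lambda> (\<mu> x))"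
proof -
  interpret p: hyperbolic_on UNIV p "vec 1" \<Lambda>
    by (fact p)
  have p_e: "p (\<mu> e) = p (vec 1)"
    by (rule p_char[OF same_char_poly_eigenvalues_e])
  show ?thesis
  proof
    show "0 < p (\<mu> e)"
      using p.f_e_pos p_e by simp
    show "p (\<mu> (c *\<^sub>R x)) = c ^ CARD('k) * p (\<mu> x)" if "x \<in> D" for c x
      by (rule homogeneous_compose[OF p p_char that])
    show "p (\<mu> (t *\<^sub>R e + x)) = p (\<mu> e) * (\<Prod>j\<in>UNIV. t + \<Lambda> (\<mu> x) $ j)" if "x \<in> D" for t x
      using p_char[OF same_char_poly_eigenvalues_shift[OF that]] p.eigenvalues p_e by simp
  qed (use subspace e_in cont in auto)
qed

end

section \<open>Garding--Dirichlet polynomials on symmetric matrices\<close>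

abbreviation entries :: "real^'n^'n \<Rightarrow> 'n \<times> 'n \<Rightarrow> real" where
  "entries A \<equiv> (\<lambda>(i, j). A $ i $ j)"

lemma sym_mat_mat_1: "sym_mat (mat 1 :: real^'n^'n)"
  by (simp add: sym_mat_def)

lemma sym_mat_scaleR: "sym_mat A \<Longrightarrow> sym_mat (c *\<^sub>R A)"
  by (simp add: sym_mat_def transpose_scalar)

lemma sym_mat_add: "sym_mat A \<Longrightarrow> sym_mat B \<Longrightarrow> sym_mat (A + B)"
  by (simp add: sym_mat_def transpose_def vec_eq_iff)

lemma sym_mat_shift: "sym_mat A \<Longrightarrow> sym_mat (t *\<^sub>R mat 1 + A)"
  by (intro sym_mat_add sym_mat_scaleR sym_mat_mat_1)

lemma subspace_sym_mat: "subspace {A :: real^'n^'n. sym_mat A}"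
  by (simp add: subspace_def sym_mat_add sym_mat_scaleR) (simp add: sym_mat_def transpose_def vec_eq_iff)

lemma homog_poly_on_Sym_homogeneous:
  assumes "homog_poly_on_Sym N F" and "sym_mat A"
  shows "F (c *\<^sub>R A) = c ^ N * F A"
proof -
  obtain cF where cF: "homog_mpoly N cF" and F: "\<forall>A. sym_mat A \<longrightarrow> F A = mpoly_eval cF (entries A)"
    using assms(1) by (auto simp: homog_poly_on_Sym_def)
  have "entries (c *\<^sub>R A) = (\<lambda>v. c * entries A v)"
    by (auto simp: fun_eq_iff)
  then have "F (c *\<^sub>R A) = mpoly_eval cF (\<lambda>v. c * entries A v)"
    using F assms(2) sym_mat_scaleR by metis
  also have "\<dots> = c ^ N * F A"
    using F assms(2) by (simp add: mpoly_eval_homogeneous[OF cF])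
  finally show ?thesis .
qed

lemma homog_poly_on_Sym_continuous:
  assumes "homog_poly_on_Sym N F"
  shows "continuous_on {A. sym_mat A} F"
proof -
  obtain cF where F: "\<forall>A. sym_mat A \<longrightarrow> F A = mpoly_eval cF (entries A)"
    using assms by (auto simp: homog_poly_on_Sym_def)
  have "continuous_on {A. sym_mat A} (\<lambda>A :: real^'a^'a. mpoly_eval cF (entries A))"
    unfolding case_prod_beta by (intro continuous_on_mpoly_eval continuous_intros)
  then show ?thesis
    by (rule continuous_on_cong[THEN iffD1, rotated 2]) (use F in auto)
qed

lemma GD_poly_hyperbolic_on:
  fixes F :: "real^'n^'n \<Rightarrow> real" and \<mu> :: "real^'n^'n \<Rightarrow> real^'m"
  assumes "GD_poly CARD('m) F"
    and "\<forall>A. sym_mat A \<longrightarrow> (\<forall>t. F (t *\<^sub>R mat 1 + A) = F (mat 1) * (\<Prod>j\<in>UNIV. t + \<mu> A $ j))"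
  shows "hyperbolic_on {A. sym_mat A} F (mat 1) \<mu>"
  using assms subspace_sym_mat sym_mat_mat_1
  by unfold_locales (auto simp: GD_poly_def homog_poly_on_Sym_homogeneous homog_poly_on_Sym_continuous)

lemma universal_GD_hyperbolic_on:
  fixes p :: "real^'m \<Rightarrow> real" and \<Lambda> :: "real^'m \<Rightarrow> real^'k"
  assumes "universal_GD CARD('k) p"
    and "\<forall>x t. p (t *\<^sub>R vec 1 + x) = p (vec 1) * (\<Prod>j\<in>UNIV. t + \<Lambda> x $ j)"
  shows "hyperbolic_on UNIV p (vec 1) \<Lambda>"
proof -
  obtain c where c: "homog_mpoly CARD('k) c" "\<forall>x. p x = mpoly_eval c (\<lambda>i. x $ i)"
    using assms(1) by (auto simp: universal_GD_def)
  have "continuous_on UNIV (\<lambda>x :: real^'m. mpoly_eval c (\<lambda>i. x $ i))"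
    by (intro continuous_on_mpoly_eval continuous_intros)
  then show ?thesis
    using assms c by unfold_locales (auto simp: universal_GD_def mpoly_eval_homogeneous)
qed

lemma sym_mat_shift_expansion:
  fixes F :: "real^'n^'n \<Rightarrow> real"
  assumes "\<forall>A. sym_mat A \<longrightarrow> F A = mpoly_eval c (entries A)"
  shows "\<exists>D r. (\<forall>k. poly_fun (r k)) \<and>
           (\<forall>A t. sym_mat A \<longrightarrow> F (t *\<^sub>R mat 1 + A) = (\<Sum>k\<le>D. r k (entries A) * t ^ k))"
proof -
  define G where "G e t = mpoly_eval c (\<lambda>v. t * (if fst v = snd v then 1 else 0) + e v)"
    for e :: "'n \<times> 'n \<Rightarrow> real" and t
  have "poly_fun (\<lambda>z. G (\<lambda>v. z (Some v)) (z None))"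
    unfolding G_def
    by (rule poly_fun_compose[OF poly_fun_mpoly_eval])
      (intro poly_fun_add poly_fun_mult poly_fun_var poly_fun_const)
  then obtain D r where "\<forall>k. poly_fun (r k)" "\<forall>e t. G e t = (\<Sum>k\<le>D. r k e * t ^ k)"
    using poly_fun_pair_expansion by blast
  moreover have "F (t *\<^sub>R mat 1 + A) = G (entries A) t" if "sym_mat A" for A t
    using assms sym_mat_shift[OF that] by (simp add: G_def case_prod_unfold mat_def)
  ultimately show ?thesis
    by metis
qed

lemma elem_sym_eigenvalues_poly_fun:
  fixes F :: "real^'n^'n \<Rightarrow> real" and \<mu> :: "real^'n^'n \<Rightarrow> real^'m"
  assumes F: "\<forall>A. sym_mat A \<longrightarrow> F A = mpoly_eval c (entries A)" and "F (mat 1) \<noteq> 0"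
    and \<mu>: "\<forall>A. sym_mat A \<longrightarrow> (\<forall>t. F (t *\<^sub>R mat 1 + A) = F (mat 1) * (\<Prod>j\<in>UNIV. t + \<mu> A $ j))"
  shows "\<exists>h. (\<forall>i. poly_fun (h i)) \<and> (\<forall>A. sym_mat A \<longrightarrow> elem_sym UNIV (\<lambda>j. \<mu> A $ j) = (\<lambda>i. h i (entries A)))"
proof -
  obtain D r where r: "\<forall>k. poly_fun (r k)"
    "\<forall>A t. sym_mat A \<longrightarrow> F (t *\<^sub>R mat 1 + A) = (\<Sum>k\<le>D. r k (entries A) * t ^ k)"
    using sym_mat_shift_expansion[OF F] by blast
  define h where "h i y = (if i \<le> D then r i y / F (mat 1) else 0)" for i y
  have "poly_fun (h i)" for i
    using r(1) unfolding h_def divide_inverse by (intro poly_fun_if poly_fun_mult poly_fun_const) auto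
  moreover have "elem_sym UNIV (\<lambda>j. \<mu> A $ j) i = h i (entries A)" if "sym_mat A" for A i
  proof -
    have "(\<Sum>k\<le>D. r k (entries A) * t ^ k)
        = (\<Sum>k\<le>CARD('m). (F (mat 1) * elem_sym UNIV (\<lambda>j. \<mu> A $ j) k) * t ^ k)" for t
    proof -
      have "(\<Sum>k\<le>D. r k (entries A) * t ^ k) = F (mat 1) * (\<Prod>j\<in>UNIV. t + \<mu> A $ j)"
        using r(2) \<mu> that by simp
      also have "\<dots> = (\<Sum>k\<le>CARD('m). (F (mat 1) * elem_sym UNIV (\<lambda>j. \<mu> A $ j) k) * t ^ k)"
        by (simp add: sum_elem_sym_powers[symmetric] sum_distrib_left mult.assoc)
      finally show ?thesis .
    qed
    then have coeff: "(if i \<le> D then r i (entries A) else 0)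
        = (if i \<le> CARD('m) then F (mat 1) * elem_sym UNIV (\<lambda>j. \<mu> A $ j) i else 0)"
      by (intro sum_powers_coeff_eq_if) blast
    show ?thesis
    proof (cases "i \<le> CARD('m)")
      case True
      then show ?thesis
        using coeff \<open>F (mat 1) \<noteq> 0\<close> by (auto simp: h_def field_simps split: if_splits)
    next
      case False
      then show ?thesis
        using coeff elem_sym_above_card[of "UNIV :: 'm set" i] by (auto simp: h_def split: if_splits)
    qed
  qed
  ultimately show ?thesis
    by (intro exI[of _ h]) auto
qed

lemma homog_poly_on_Sym_elem_sym_compose:
  fixes F :: "real^'n^'n \<Rightarrow> real" and \<mu> :: "real^'n^'n \<Rightarrow> real^'m" and p :: "real^'m \<Rightarrow> real"
  assumes "homog_poly_on_Sym N F" and "F (mat 1) \<noteq> 0"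
    and "\<forall>A. sym_mat A \<longrightarrow> (\<forall>t. F (t *\<^sub>R mat 1 + A) = F (mat 1) * (\<Prod>j\<in>UNIV. t + \<mu> A $ j))"
    and "poly_fun Q" and Q: "\<forall>x. p x = Q (elem_sym UNIV (\<lambda>i. x $ i))"
    and homogeneous: "\<And>c A. sym_mat A \<Longrightarrow> p (\<mu> (c *\<^sub>R A)) = c ^ K * p (\<mu> A)"
  shows "homog_poly_on_Sym K (\<lambda>A. p (\<mu> A))"
proof -
  obtain cF where "\<forall>A. sym_mat A \<longrightarrow> F A = mpoly_eval cF (entries A)"
    using assms(1) by (auto simp: homog_poly_on_Sym_def)
  from elem_sym_eigenvalues_poly_fun[OF this assms(2,3)] obtain h where
    h: "\<And>i. poly_fun (h i)" "\<And>A. sym_mat A \<Longrightarrow> elem_sym UNIV (\<lambda>j. \<mu> A $ j) = (\<lambda>i. h i (entries A))"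
    by blast
  have "poly_fun (\<lambda>y. Q (\<lambda>i. h i y))"
    by (rule poly_fun_compose[OF \<open>poly_fun Q\<close> h(1)])
  then obtain c where "(\<lambda>y. Q (\<lambda>i. h i y)) = mpoly_eval c"
    using poly_fun_imp_mpoly_eval by blast
  then have c: "p (\<mu> A) = mpoly_eval c (entries A)" if "sym_mat A" for A
    using Q h(2)[OF that] by metis
  have "p (\<mu> A) = mpoly_eval (homog_part K c) (entries A)" if "sym_mat A" for A
  proof -
    have "entries (s *\<^sub>R A) = (\<lambda>v. s * entries A v)" for s
      by (auto simp: fun_eq_iff)
    then have "mpoly_eval c (\<lambda>v. s * entries A v) = s ^ K * mpoly_eval c (entries A)" for s
      using c homogeneous that sym_mat_scaleR by metis
    then show ?thesis
      using c[OF that] by (simp add: mpoly_eval_homog_part)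
  qed
  then show ?thesis
    using homog_mpoly_homog_part unfolding homog_poly_on_Sym_def by blast
qed

lemma poly_map_poly_of_real: "poly (map_poly of_real q) (of_real t :: complex) = of_real (poly q t)"
  by (induction q) (auto simp: map_poly_pCons)

lemma only_real_roots_if_poly_eq_prod:
  fixes q :: "real poly" and r :: "'j \<Rightarrow> real"
  assumes "finite S" and "c \<noteq> 0" and q: "\<forall>t. poly q t = c * (\<Prod>j\<in>S. t + r j)"
  shows "only_real_roots q"
  unfolding only_real_roots_def
proof (intro allI impI)
  fix z :: complex
  assume z: "poly (map_poly of_real q) z = 0"
  define P where "P = smult (of_real c) (\<Prod>j\<in>S. [:of_real (r j), 1:] :: complex poly)"
  have poly_P: "poly P w = of_real c * (\<Prod>j\<in>S. w + of_real (r j))" for w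
    by (simp add: P_def poly_prod add.commute)
  have "map_poly of_real q = P"
  proof (rule ccontr)
    assume "map_poly of_real q \<noteq> P"
    then have "finite {w. poly (map_poly of_real q - P) w = 0}"
      by (intro poly_roots_finite) simp
    moreover have "range complex_of_real \<subseteq> {w. poly (map_poly of_real q - P) w = 0}"
      using q by (auto simp: poly_map_poly_of_real poly_P)
    ultimately have "finite (range complex_of_real)"
      by (rule finite_subset[rotated])
    then show False
      using finite_imageD[of complex_of_real UNIV] infinite_UNIV_char_0 by (auto simp: inj_def)
  qed
  then have "(\<Prod>j\<in>S. z + of_real (r j)) = 0"
    using z assms(2) by (simp add: poly_P)
  then obtain j where "z + of_real (r j) = 0"
    using assms(1) by auto
  then have "z = of_real (- r j)"
    by (simp add: eq_neg_iff_add_eq_0)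
  then show "z \<in> \<real>"
    by simp
qed

lemma (in hyperbolic_on) only_real_roots_shift:
  assumes "x \<in> D" and "\<forall>t. poly q t = f (t *\<^sub>R e + x)"
  shows "only_real_roots q"
  using assms f_e_pos
  by (intro only_real_roots_if_poly_eq_prod[where c = "f e" and r = "\<lambda>j. \<mu> x $ j", OF finite])
    (auto simp: eigenvalues)

lemma garding_cone_eq_eigen_cone:
  assumes "hyperbolic_on {A. sym_mat A} F (mat 1) \<mu>"
  shows "garding_cone F = {A. sym_mat A \<and> (\<forall>j. 0 < \<mu> A $ j)}"
proof -
  interpret hyperbolic_on "{A. sym_mat A}" F "mat 1" \<mu>
    by (fact assms)
  show ?thesis
    using connected_component_eq_eigen_cone by (simp add: garding_cone_def eigen_cone_def)
qed

lemma garding_cone_vec_eq_eigen_cone: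
  assumes "hyperbolic_on UNIV p (vec 1) \<Lambda>"
  shows "garding_cone_vec p = {x. \<forall>j. 0 < \<Lambda> x $ j}"
proof -
  interpret hyperbolic_on UNIV p "vec 1" \<Lambda>
    by (fact assms)
  show ?thesis
    using connected_component_eq_eigen_cone by (simp add: garding_cone_vec_def eigen_cone_def)
qed

lemma GD_poly_if_hyperbolic_on:
  fixes P :: "real^'n^'n \<Rightarrow> real" and \<mu> :: "real^'n^'n \<Rightarrow> real^'j"
  assumes "homog_poly_on_Sym CARD('j) P" and hyp: "hyperbolic_on {A. sym_mat A} P (mat 1) \<mu>"
    and "\<And>A. pos_def A \<Longrightarrow> \<forall>j. 0 < \<mu> A $ j"
  shows "GD_poly CARD('j) P"
proof -
  interpret hyperbolic_on "{A. sym_mat A}" P "mat 1" \<mu>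
    by (fact hyp)
  show ?thesis
    using assms f_e_pos only_real_roots_shift
    by (auto simp: GD_poly_def garding_cone_eq_eigen_cone[OF hyp] pos_def_def)
qed

lemma universal_GD_pos:
  assumes "universal_GD N p" and "\<forall>i. 0 < x $ i"
  shows "0 < p x"
proof -
  obtain c where c: "\<forall>m. Poly_Mapping.lookup c m \<ge> 0" "\<forall>x. p x = mpoly_eval c (\<lambda>i. x $ i)"
    and "0 < p (vec 1)"
    using assms(1) by (auto simp: universal_GD_def)
  then have "c \<noteq> 0"
    by auto
  then show ?thesis
    using c assms(2) by (simp add: mpoly_eval_pos)
qed

lemma pos_orthant_in_eigen_cone:
  assumes "universal_GD N p" and "hyperbolic_on UNIV p (vec 1) \<Lambda>" and "\<forall>i. 0 < x $ i"
  shows "\<forall>j. 0 < \<Lambda> x $ j"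
proof -
  interpret hyperbolic_on UNIV p "vec 1" \<Lambda>
    by (fact assms(2))
  have "p (t *\<^sub>R vec 1 + x) \<noteq> 0" if "t \<ge> 0" for t
    using universal_GD_pos[OF assms(1)] assms(3) that by (simp add: add_nonneg_pos less_imp_neq[symmetric])
  then show ?thesis
    using eigen_cone_iff_ray[of x] by (simp add: eigen_cone_def)
qed

lemma GD_poly_pos_def_eigenvalues_pos:
  assumes "GD_poly N F" and "hyperbolic_on {A. sym_mat A} F (mat 1) \<mu>" and "pos_def A"
  shows "\<forall>j. 0 < \<mu> A $ j"
  using assms by (simp add: GD_poly_def garding_cone_eq_eigen_cone)

lemma matrix_add_rdistrib: "(A + B) ** C = A ** C + B ** C"
  by (vector matrix_matrix_mult_def sum.distrib[symmetric] field_simps)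

lemma orthogonal_congruence_shift:
  fixes g A :: "real^'n^'n"
  assumes "orthogonal_matrix g"
  shows "g ** (t *\<^sub>R mat 1 + A) ** transpose g = t *\<^sub>R mat 1 + g ** A ** transpose g"
proof -
  have "g ** (t *\<^sub>R mat 1 + A) ** transpose g = t *\<^sub>R (g ** transpose g) + g ** A ** transpose g"
    by (simp add: matrix_add_ldistrib matrix_add_rdistrib matrix_scalar_ac scalar_matrix_assoc)
  then show ?thesis
    using assms by (simp add: orthogonal_matrix_def)
qed

lemma sym_mat_orthogonal_congruence: "sym_mat A \<Longrightarrow> sym_mat (g ** A ** transpose g)"
  by (simp add: sym_mat_def matrix_transpose_mul matrix_mul_assoc)

lemma real_invariant_compose:
  fixes F :: "real^'n^'n \<Rightarrow> real" and \<mu> :: "real^'n^'n \<Rightarrow> real^'m"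
  assumes "real_invariant F" and "F (mat 1) \<noteq> 0"
    and \<mu>: "\<forall>A. sym_mat A \<longrightarrow> (\<forall>t. F (t *\<^sub>R mat 1 + A) = F (mat 1) * (\<Prod>j\<in>UNIV. t + \<mu> A $ j))"
    and p_char: "\<And>x y. same_char_poly x y \<Longrightarrow> p x = p y"
  shows "real_invariant (\<lambda>A. p (\<mu> A))"
  unfolding real_invariant_def
proof (intro allI impI, elim conjE)
  fix g A :: "real^'n^'n" assume g: "orthogonal_matrix g" and A: "sym_mat A"
  have "F (t *\<^sub>R mat 1 + g ** A ** transpose g) = F (t *\<^sub>R mat 1 + A)" for t
    using assms(1) g sym_mat_shift[OF A]
    by (simp add: real_invariant_def orthogonal_congruence_shift[symmetric])
  then have "F (mat 1) * (\<Prod>j\<in>UNIV. t + \<mu> (g ** A ** transpose g) $ j) = F (mat 1) * (\<Prod>j\<in>UNIV. t + \<mu> A $ j)"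
    for t using \<mu> A sym_mat_orthogonal_congruence[OF A] by metis
  then have "same_char_poly (\<mu> (g ** A ** transpose g)) (\<mu> A)"
    using assms(2) by (simp add: same_char_poly_def)
  then show "p (\<mu> (g ** A ** transpose g)) = p (\<mu> A)"
    by (rule p_char)
qed

theorem theorem7p4:
  fixes F :: "real^'n^'n \<Rightarrow> real"
    and lamF :: "real^'n^'n \<Rightarrow> real^'m"
    and p :: "real^'m \<Rightarrow> real"
    and Lam :: "real^'m \<Rightarrow> real^'k"
  assumes F_GD: "GD_poly CARD('m) F"
    and lamF_def: "\<forall>A. sym_mat A \<longrightarrow>
       (\<forall>t. F (t *\<^sub>R mat 1 + A) = F (mat 1) * (\<Prod>j\<in>UNIV. t + lamF A $ j))"
    and p_univ: "universal_GD CARD('k) p"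
    and Lam_def: "\<forall>x t. p (t *\<^sub>R vec 1 + x) = p (vec 1) * (\<Prod>j\<in>UNIV. t + Lam x $ j)"
  shows "GD_poly CARD('k) (\<lambda>A. p (lamF A))
    \<and> (\<forall>A. sym_mat A \<longrightarrow>
         (\<forall>t. p (lamF (t *\<^sub>R mat 1 + A)) = p (lamF (mat 1)) * (\<Prod>j\<in>UNIV. t + Lam (lamF A) $ j)))
    \<and> garding_cone (\<lambda>A. p (lamF A)) = {A. sym_mat A \<and> lamF A \<in> garding_cone_vec p}
    \<and> (real_invariant F \<longrightarrow> real_invariant (\<lambda>A. p (lamF A)))"
proof -
  interpret F: hyperbolic_on "{A. sym_mat A}" F "mat 1" lamF
    by (rule GD_poly_hyperbolic_on[OF F_GD lamF_def])
  have p: "hyperbolic_on UNIV p (vec 1) Lam"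
    by (rule universal_GD_hyperbolic_on[OF p_univ Lam_def])
  obtain c where c: "\<forall>x. p x = mpoly_eval c (\<lambda>i. x $ i)"
    using p_univ unfolding universal_GD_def by blast
  have sym: "\<forall>\<sigma> x. \<sigma> permutes UNIV \<longrightarrow> p (\<chi> i. x $ \<sigma> i) = p x"
    using p_univ by (simp add: universal_GD_def)
  have p_char: "\<And>x y. same_char_poly x y \<Longrightarrow> p x = p y"
    by (rule symmetric_mpoly_eq_if_same_char_poly[OF c sym])
  have poly: "homog_poly_on_Sym CARD('k) (\<lambda>A. p (lamF A))"
    using symmetric_mpoly_elem_sym_factorization[OF c sym] F_GD F.f_e_pos lamF_def
      F.homogeneous_compose[OF p p_char]
    by (auto simp: GD_poly_def intro!: homog_poly_on_Sym_elem_sym_compose)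
  have PF: "hyperbolic_on {A. sym_mat A} (\<lambda>A. p (lamF A)) (mat 1) (\<lambda>A. Lam (lamF A))"
    by (rule F.hyperbolic_on_compose[OF p p_char homog_poly_on_Sym_continuous[OF poly]])
  have "\<forall>j. 0 < Lam (lamF A) $ j" if "pos_def A" for A
    using pos_orthant_in_eigen_cone[OF p_univ p]
      GD_poly_pos_def_eigenvalues_pos[OF F_GD F.hyperbolic_on_axioms that]
    by blast
  then show ?thesis
    using GD_poly_if_hyperbolic_on[OF poly PF] hyperbolic_on.eigenvalues[OF PF]
      garding_cone_eq_eigen_cone[OF PF] garding_cone_vec_eq_eigen_cone[OF p]
      real_invariant_compose[OF _ _ lamF_def p_char] F.f_e_pos
    by auto
qed

end
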